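(* Let $n \geq 2$ and $m \geq 3$ be integers, let $\mathcal{V}=\mathcal{V}_1\otimes \dots \otimes \mathcal{V}_m$ be a tensor product of vector spaces over a field $\mathbb{F}$, and let $\{x_a: a \in [n]\}$ be a multiset of product tensors in $\mathcal{V}$ with $x_a=x_{a,1}\otimes\dots\otimes x_{a,m}$. For each $S \subseteq [n]$ and $J \subseteq [m]$, let $d_J^S=\dim\operatorname{span}\{\bigotimes_{j \in J} x_{a,j} : a \in S\}$. If for every subset $S \subseteq [n]$ with $2 \leq |S| \leq n$ there exists a partition $J_1 \sqcup \dots \sqcup J_t =[m]$ (which may depend on $S$) such that $2 |S| \leq \sum_{i \in [t]} (d_{J_i}^S-1)+1$, then $\sum_{a \in [n]} x_a$ constitutes a unique tensor rank decomposition.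
   Context: $[n]=\{1,\dots,n\}$. A product tensor is a non-zero tensor $z_1\otimes\dots\otimes z_m$, $z_j\in\mathcal{V}_j$. A decomposition $v=\sum_{a\in[n]}x_a$ into product tensors constitutes a unique tensor rank decomposition if for every non-negative integer $r\le n$ and every multiset of product tensors $\{y_a:a\in[r]\}$ with $v=\sum_{a\in[r]}y_a$, it holds that $r=n$ and $\{x_a\}=\{y_a\}$ as multisets. *)

theory Defs
  imports "HOL-Library.FuncSet" "HOL-Library.Disjoint_Sets" "HOL-Library.Multiset"
          "HOL-Library.Function_Algebras" "HOL.Vector_Spaces"
begin

text \<open>Coordinate model: the factor space V_j is the space of finitely supported
  functions B_j -> F (every vector space over F is of this form for a basis B_j).
  Tensors in V_J (J a set of factor indices) are functions on multi-indices
  iota :: nat => 'b (extensional on J) with values in F.\<close>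

definition fsupp_space :: "'b set \<Rightarrow> ('b \<Rightarrow> 'a::zero) set" where
  "fsupp_space B = {f. finite {b. f b \<noteq> 0} \<and> {b. f b \<noteq> 0} \<subseteq> B}"

definition ptensor :: "nat set \<Rightarrow> (nat \<Rightarrow> 'b \<Rightarrow> 'a::comm_semiring_1) \<Rightarrow> (nat \<Rightarrow> 'b) \<Rightarrow> 'a" where
  "ptensor J z = (\<lambda>\<iota>. if \<iota> \<in> extensional J then (\<Prod>j\<in>J. z j (\<iota> j)) else 0)"

definition is_product_tensor :: "(nat \<Rightarrow> 'b set) \<Rightarrow> nat \<Rightarrow> ((nat \<Rightarrow> 'b) \<Rightarrow> 'a::comm_semiring_1) \<Rightarrow> bool" where
  "is_product_tensor B m v \<longleftrightarrow> v \<noteq> 0 \<and>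
     (\<exists>z. (\<forall>j\<in>{1..m}. z j \<in> fsupp_space (B j)) \<and> v = ptensor {1..m} z)"

definition tscale :: "'a::times \<Rightarrow> ('c \<Rightarrow> 'a) \<Rightarrow> 'c \<Rightarrow> 'a" where
  "tscale c f = (\<lambda>\<iota>. c * f \<iota>)"

definition dJS :: "(nat \<Rightarrow> nat \<Rightarrow> 'b \<Rightarrow> 'a::field) \<Rightarrow> nat set \<Rightarrow> nat set \<Rightarrow> nat" where
  "dJS xf J S = vector_space.dim tscale ((\<lambda>a. ptensor J (xf a)) ` S)"

definition unique_tensor_rank_decomp ::
  "(nat \<Rightarrow> 'b set) \<Rightarrow> nat \<Rightarrow> nat \<Rightarrow> (nat \<Rightarrow> (nat \<Rightarrow> 'b) \<Rightarrow> 'a::field) \<Rightarrow> bool" where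
  "unique_tensor_rank_decomp B m n x \<longleftrightarrow>
     (\<forall>r y. r \<le> n \<and> (\<forall>a\<in>{1..r}. is_product_tensor B m (y a)) \<and>
            (\<Sum>a\<in>{1..r}. y a) = (\<Sum>a\<in>{1..n}. x a) \<longrightarrow>
            r = n \<and> image_mset y (mset_set {1..r}) = image_mset x (mset_set {1..n}))"

end

theory Submission
  imports Defs
begin

(* If \<Sum>a x_a = \<Sum>b y_b with r \<le> n product tensors y_b, the n + r tensors satisfy a
  signed linear relation. By induction on the number of terms, every such relation among
  product tensors has at least as many y-terms as x-terms, and equally many only if the two
  multisets agree. If the span of the terms is a direct sum along a nontrivial partition of
  the terms, the relation splits accordingly. Otherwise the terms form a non-splitting family
  and the splitting theorem applies: for each partition J_1, ..., J_t of the factors,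
  dim span \<ge> \<Sum>i (d_{J_i} - 1) + 1. With the hypothesis for the set S of x-terms this gives
  2|S| \<le> dim span < number of terms, so there are more y-terms than x-terms.

  Grouping the factors as J versus the rest reduces the splitting theorem to the bipartite
  bound dim g(E) + dim s(E) \<le> dim (g \<otimes> s)(E) + 1 for a non-splitting family g_e \<otimes> s_e.
  This goes by induction on E: after removing one element e and decomposing the rest into
  non-splitting blocks, g_e \<otimes> s_e is a sum of nonzero tensors, one from the span of each
  block, and the dimension count #i + dim \<Union>A_i + dim \<Union>B_i \<le> \<Sum>i (dim A_i + dim B_i) for
  vanishing sums of nonzero q_i \<in> span A_i \<otimes> span B_i closes the induction. *)

section \<open>Tensors as functions on multi-indices\<close>

type_synonym ('b, 'a) tensor = "(nat \<Rightarrow> 'b) \<Rightarrow> 'a"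

interpretation tv: vector_space "tscale :: 'a::field \<Rightarrow> ('c \<Rightarrow> 'a) \<Rightarrow> 'c \<Rightarrow> 'a"
  by unfold_locales (auto simp: tscale_def fun_eq_iff algebra_simps)

lemma tscale_apply: "tscale c f x = c * f x"
  by (simp add: tscale_def)

lemma span_subset_spanI: "A \<subseteq> tv.span B \<Longrightarrow> tv.span A \<subseteq> tv.span (B :: ('c \<Rightarrow> 'a::field) set)"
  using tv.span_minimal[OF _ tv.subspace_span] by blast

lemma sum_apply: "(\<Sum>i\<in>I. f i) x = (\<Sum>i\<in>I. f i x)"
  by (induction I rule: infinite_finite_induct) auto

definition supported_on :: "nat set \<Rightarrow> ('b, 'a::zero) tensor \<Rightarrow> bool" where
  "supported_on X f \<longleftrightarrow> (\<forall>\<iota>. \<iota> \<notin> extensional X \<longrightarrow> f \<iota> = 0)"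

definition merge_index :: "nat set \<Rightarrow> (nat \<Rightarrow> 'b) \<Rightarrow> (nat \<Rightarrow> 'b) \<Rightarrow> nat \<Rightarrow> 'b" where
  "merge_index X \<iota> \<kappa> = (\<lambda>i. if i \<in> X then \<iota> i else \<kappa> i)"

definition slice :: "nat set \<Rightarrow> ('b, 'a::zero) tensor \<Rightarrow> (nat \<Rightarrow> 'b) \<Rightarrow> ('b, 'a) tensor" where
  "slice X x \<kappa> = (\<lambda>\<iota>. if \<iota> \<in> extensional X then x (merge_index X \<iota> \<kappa>) else 0)"

definition outer :: "nat set \<Rightarrow> nat set \<Rightarrow> ('b, 'a::comm_semiring_1) tensor \<Rightarrow> ('b, 'a) tensor
    \<Rightarrow> ('b, 'a) tensor" where
  "outer X Y g s =
     (\<lambda>\<iota>. if \<iota> \<in> extensional (X \<union> Y) then g (restrict \<iota> X) * s (restrict \<iota> Y) else 0)"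

lemma merge_index_extensional:
  "\<iota> \<in> extensional X \<Longrightarrow> \<kappa> \<in> extensional Y \<Longrightarrow> merge_index X \<iota> \<kappa> \<in> extensional (X \<union> Y)"
  by (auto simp: merge_index_def extensional_def)

lemma restrict_merge_index_left: "\<iota> \<in> extensional X \<Longrightarrow> restrict (merge_index X \<iota> \<kappa>) X = \<iota>"
  by (auto simp: merge_index_def extensional_def restrict_def fun_eq_iff)

lemma restrict_merge_index_right:
  "X \<inter> Y = {} \<Longrightarrow> \<kappa> \<in> extensional Y \<Longrightarrow> restrict (merge_index X \<iota> \<kappa>) Y = \<kappa>"
  by (auto simp: merge_index_def extensional_def restrict_def fun_eq_iff)

lemma merge_index_restrict:
  "\<iota> \<in> extensional (X \<union> Y) \<Longrightarrow> merge_index X (restrict \<iota> X) (restrict \<iota> Y) = \<iota>"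
  by (auto simp: merge_index_def extensional_def restrict_def fun_eq_iff)

lemma outer_commute: "outer X Y g s = outer Y X s g"
  by (auto simp: outer_def fun_eq_iff Un_commute mult.commute)

lemma supported_on_outer: "supported_on (X \<union> Y) (outer X Y g s)"
  by (simp add: supported_on_def outer_def)

lemma supported_on_ptensor: "supported_on J (ptensor J z)"
  by (simp add: supported_on_def ptensor_def)

lemma supported_on_add:
  "supported_on X f \<Longrightarrow> supported_on X g \<Longrightarrow> supported_on X (f + (g :: ('b, 'a::field) tensor))"
  by (simp add: supported_on_def)

lemma supported_on_scale:
  "supported_on X f \<Longrightarrow> supported_on X (tscale c (f :: ('b, 'a::field) tensor))"
  by (simp add: supported_on_def tscale_apply)

lemma supported_on_span:
  assumes "\<And>f. f \<in> S \<Longrightarrow> supported_on X f" "(x :: ('b, 'a::field) tensor) \<in> tv.span S"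
  shows "supported_on X x"
proof -
  have "tv.subspace {f :: ('b, 'a) tensor. supported_on X f}"
    by (auto simp: tv.subspace_def supported_on_def tscale_apply)
  then show ?thesis
    using tv.span_minimal[of S "{f. supported_on X f}"] assms by auto
qed

lemma slice_outer:
  assumes "X \<inter> Y = {}" "supported_on X g" "\<kappa> \<in> extensional Y"
  shows "slice X (outer X Y g s) \<kappa> = tscale (s \<kappa>) g"
proof
  fix \<iota>
  show "slice X (outer X Y g s) \<kappa> \<iota> = tscale (s \<kappa>) g \<iota>"
    using assms
    by (cases "\<iota> \<in> extensional X")
      (simp_all add: slice_def outer_def supported_on_def merge_index_extensional
        restrict_merge_index_left restrict_merge_index_right mult.commute tscale_apply)
qed

lemma slice_outer_right:
  assumes "X \<inter> Y = {}" "supported_on Y s" "\<iota> \<in> extensional X"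
  shows "slice Y (outer X Y g s) \<iota> = tscale (g \<iota>) s"
  using slice_outer[of Y X s \<iota> g] assms by (simp add: outer_commute Int_commute)

lemma slice_sum: "slice X (\<Sum>i\<in>I. f i) \<kappa> = (\<Sum>i\<in>I. slice X (f i :: ('b, 'a::field) tensor) \<kappa>)"
  by (auto simp: slice_def fun_eq_iff sum_apply)

lemma slice_in_span_image:
  assumes "(x :: ('b, 'a::field) tensor) \<in> tv.span S"
  shows "slice X x \<kappa> \<in> tv.span ((\<lambda>s. slice X s \<kappa>) ` S)"
proof -
  have "module_hom tscale tscale (\<lambda>x :: ('b, 'a) tensor. slice X x \<kappa>)"
    by unfold_locales (auto simp: slice_def fun_eq_iff algebra_simps tscale_apply)
  then show ?thesis using module_hom.span_image assms by blast
qed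

lemma slice_in_span_left:
  fixes g s :: "'e \<Rightarrow> ('b, 'a::field) tensor"
  assumes "X \<inter> Y = {}" "\<forall>c\<in>C. supported_on X (g c)"
    "x \<in> tv.span ((\<lambda>c. outer X Y (g c) (s c)) ` C)" "\<kappa> \<in> extensional Y"
  shows "slice X x \<kappa> \<in> tv.span (g ` C)"
proof -
  have "(\<lambda>y. slice X y \<kappa>) ` (\<lambda>c. outer X Y (g c) (s c)) ` C \<subseteq> tv.span (g ` C)"
  proof clarify
    fix c assume c: "c \<in> C"
    then have "slice X (outer X Y (g c) (s c)) \<kappa> = tscale (s c \<kappa>) (g c)"
      using slice_outer[OF assms(1) _ assms(4)] assms(2) by blast
    then show "slice X (outer X Y (g c) (s c)) \<kappa> \<in> tv.span (g ` C)"
      using c by (simp add: tv.span_scale tv.span_base)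
  qed
  then show ?thesis
    using slice_in_span_image[OF assms(3)] span_subset_spanI by blast
qed

lemma slice_in_span_right:
  fixes g s :: "'e \<Rightarrow> ('b, 'a::field) tensor"
  assumes "X \<inter> Y = {}" "\<forall>c\<in>C. supported_on Y (s c)"
    "x \<in> tv.span ((\<lambda>c. outer X Y (g c) (s c)) ` C)" "\<iota> \<in> extensional X"
  shows "slice Y x \<iota> \<in> tv.span (s ` C)"
  using slice_in_span_left[of Y X C s x g \<iota>] assms by (simp add: outer_commute Int_commute)

lemma eq_0_if_slices_eq_0:
  assumes "supported_on (X \<union> Y) x" "\<And>\<kappa>. \<kappa> \<in> extensional Y \<Longrightarrow> slice X x \<kappa> = 0"
  shows "x = 0"
proof
  fix \<iota>
  show "x \<iota> = 0 \<iota>"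
  proof (cases "\<iota> \<in> extensional (X \<union> Y)")
    case True
    have "slice X x (restrict \<iota> Y) (restrict \<iota> X) = 0"
      using assms(2)[of "restrict \<iota> Y"] by simp
    then show ?thesis using True by (simp add: slice_def merge_index_restrict)
  next
    case False
    then show ?thesis using assms(1) by (simp add: supported_on_def)
  qed
qed

lemma slice_zero [simp]: "slice X 0 \<kappa> = 0"
  by (simp add: slice_def fun_eq_iff)

lemma outer_scale_left:
  "outer X Y (tscale c g) s = tscale c (outer X Y g (s :: ('b, 'a::field) tensor))"
  by (simp add: outer_def fun_eq_iff mult.assoc tscale_apply)

lemma outer_scale_right:
  "outer X Y g (tscale c s) = tscale c (outer X Y g (s :: ('b, 'a::field) tensor))"
  by (simp add: outer_def fun_eq_iff algebra_simps tscale_apply)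

lemma outer_add_right: "outer X Y g (s1 + s2) = outer X Y g s1 + outer X Y g s2"
  by (simp add: outer_def fun_eq_iff algebra_simps)

lemma outer_zero_left [simp]: "outer X Y 0 s = 0"
  and outer_zero_right [simp]: "outer X Y g 0 = 0"
  by (simp_all add: outer_def fun_eq_iff)

lemma outer_sum_left:
  "outer X Y (\<Sum>i\<in>I. f i) s = (\<Sum>i\<in>I. outer X Y (f i) (s :: ('b, 'a::field) tensor))"
  by (simp add: outer_def fun_eq_iff sum_apply sum_distrib_right)

lemma outer_neq_0:
  assumes "X \<inter> Y = {}" "supported_on X g" "supported_on Y s"
    "g \<noteq> 0" "(s :: ('b, 'a::field) tensor) \<noteq> 0"
  shows "outer X Y g s \<noteq> 0"
proof
  assume outer0: "outer X Y g s = 0"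
  obtain \<iota> where \<iota>: "g \<iota> \<noteq> 0" using assms(4) by (auto simp: fun_eq_iff)
  obtain \<kappa> where \<kappa>: "s \<kappa> \<noteq> 0" using assms(5) by (auto simp: fun_eq_iff)
  have "\<kappa> \<in> extensional Y" using \<kappa> assms(3) by (auto simp: supported_on_def)
  then have "slice X (outer X Y g s) \<kappa> \<iota> = s \<kappa> * g \<iota>"
    using slice_outer[OF assms(1,2)] by (simp add: tscale_apply)
  then show False using outer0 \<iota> \<kappa> by (auto simp: slice_def split: if_splits)
qed

lemma ptensor_eq_outer:
  assumes "finite M" "J \<subseteq> M"
  shows "ptensor M z = outer J (M - J) (ptensor J z) (ptensor (M - J) z)"
proof
  fix \<iota>
  have M: "J \<union> (M - J) = M" using assms by auto
  have "(\<Prod>j\<in>M. z j (\<iota> j)) = (\<Prod>j\<in>J. z j (\<iota> j)) * (\<Prod>j\<in>M - J. z j (\<iota> j))"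
    using prod.subset_diff[OF assms(2,1)] by (simp add: mult.commute)
  then show "ptensor M z \<iota> = outer J (M - J) (ptensor J z) (ptensor (M - J) z) \<iota>"
    using M by (simp add: ptensor_def outer_def)
qed

section \<open>Dimension counting in function spaces\<close>

lemma finite_basisE:
  fixes V :: "('c \<Rightarrow> 'a::field) set"
  assumes "V \<subseteq> tv.span W" "finite W"
  obtains B where "B \<subseteq> V" "tv.independent B" "V \<subseteq> tv.span B" "card B = tv.dim V" "finite B"
proof -
  obtain B where B: "B \<subseteq> V" "tv.independent B" "V \<subseteq> tv.span B" "card B = tv.dim V"
    using tv.basis_exists by blast
  have "finite B" using tv.independent_span_bound[OF assms(2) B(2)] B(1) assms(1) by auto
  then show ?thesis using B that by blast
qed

lemma dim_le_if_subset_span: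
  fixes V :: "('c \<Rightarrow> 'a::field) set"
  assumes "V \<subseteq> tv.span W" "finite W"
  shows "tv.dim V \<le> tv.dim W"
proof -
  obtain B where B: "W \<subseteq> tv.span B" "card B = tv.dim W" "finite B"
    using finite_basisE[OF tv.span_superset assms(2)] by metis
  have "V \<subseteq> tv.span B" using assms(1) B(1) by (metis tv.span_mono tv.span_span subset_trans)
  then show ?thesis using tv.dim_le_card[OF _ B(3)] B(2) by auto
qed

lemma dim_le_if_subset:
  fixes V :: "('c \<Rightarrow> 'a::field) set"
  shows "V \<subseteq> W \<Longrightarrow> finite W \<Longrightarrow> tv.dim V \<le> tv.dim W"
  using dim_le_if_subset_span tv.span_superset by blast

lemma dim_Un_le_card:
  fixes A :: "('c \<Rightarrow> 'a::field) set"
  assumes "finite A" "finite C"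
  shows "tv.dim (A \<union> C) \<le> tv.dim A + card C"
proof -
  obtain B where B: "A \<subseteq> tv.span B" "card B = tv.dim A" "finite B"
    using finite_basisE[OF tv.span_superset assms(1)] by metis
  have "A \<union> C \<subseteq> tv.span (B \<union> C)"
    using B(1) tv.span_mono[of B "B \<union> C"] tv.span_superset[of "B \<union> C"] by blast
  then have "tv.dim (A \<union> C) \<le> card (B \<union> C)" using tv.dim_le_card B(3) assms(2) by blast
  also have "\<dots> \<le> card B + card C" by (rule card_Un_le)
  finally show ?thesis using B(2) by simp
qed

lemma dim_pos_if_nonzero_in_span:
  fixes S :: "('c \<Rightarrow> 'a::field) set"
  assumes "finite S" "x \<in> tv.span S" "x \<noteq> 0"
  shows "0 < tv.dim S"
proof (rule ccontr)
  assume "\<not> 0 < tv.dim S"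
  moreover obtain B where "S \<subseteq> tv.span B" "card B = tv.dim S" "finite B"
    using finite_basisE[OF tv.span_superset assms(1)] by metis
  ultimately have "tv.span S \<subseteq> {0}"
    by (metis card_0_eq tv.span_empty span_subset_spanI gr0I)
  then show False using assms(2,3) by auto
qed

lemma finite_spanning_subsetE:
  fixes V :: "('c \<Rightarrow> 'a::field) set"
  assumes "V \<subseteq> tv.span W" "finite W" "x \<in> V" "x \<noteq> 0"
  obtains F where "F \<subseteq> V" "V \<subseteq> tv.span F" "finite F" "0 < tv.dim F"
proof -
  obtain F where F: "F \<subseteq> V" "V \<subseteq> tv.span F" "finite F"
    using finite_basisE[OF assms(1,2)] by metis
  then have "0 < tv.dim F" using dim_pos_if_nonzero_in_span[OF F(3) _ assms(4)] assms(3) by blast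
  then show ?thesis using F that by blast
qed

lemma dim_singleton_nonzero: "x \<noteq> 0 \<Longrightarrow> tv.dim {x :: 'c \<Rightarrow> 'a::field} = 1"
  using tv.dim_le_card'[of "{x}"] dim_pos_if_nonzero_in_span[of "{x}" x] tv.span_base[of x "{x}"]
  by simp

lemma in_span_image_sum:
  fixes g :: "'i \<Rightarrow> 'c \<Rightarrow> 'a::field"
  assumes "finite L" "x \<in> tv.span (g ` L)"
  shows "\<exists>c. x = (\<Sum>l\<in>L. tscale (c l) (g l))"
  using assms
proof (induction L arbitrary: x rule: finite_induct)
  case empty
  then show ?case by simp
next
  case (insert a L)
  obtain k where "x - tscale k (g a) \<in> tv.span (g ` L)"
    using insert.prems tv.span_breakdown_eq[of x "g a" "g ` L"] by auto
  with insert.IH obtain c where c: "x - tscale k (g a) = (\<Sum>l\<in>L. tscale (c l) (g l))" by blast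
  have "(\<Sum>l\<in>L. tscale ((c(a := k)) l) (g l)) = (\<Sum>l\<in>L. tscale (c l) (g l))"
    using insert.hyps(2) by (intro sum.cong) auto
  then have "(\<Sum>l\<in>insert a L. tscale ((c(a := k)) l) (g l)) = x"
    using insert.hyps c by (simp add: algebra_simps)
  then show ?case by metis
qed

lemma in_span_UN_sum:
  fixes S :: "'i \<Rightarrow> ('c \<Rightarrow> 'a::field) set"
  assumes "finite I" "x \<in> tv.span (\<Union>i\<in>I. S i)"
  shows "\<exists>f. (\<forall>i\<in>I. f i \<in> tv.span (S i)) \<and> x = (\<Sum>i\<in>I. f i)"
  using assms
proof (induction I arbitrary: x rule: finite_induct)
  case empty
  then show ?case by simp
next
  case (insert a I)
  obtain y z where yz: "x = y + z" "y \<in> tv.span (S a)" "z \<in> tv.span (\<Union>i\<in>I. S i)"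
    using insert.prems unfolding UN_insert tv.span_Un by blast
  from insert.IH[OF yz(3)] obtain f where f: "\<forall>i\<in>I. f i \<in> tv.span (S i)" "z = (\<Sum>i\<in>I. f i)"
    by blast
  have "(\<Sum>i\<in>I. (f(a := y)) i) = (\<Sum>i\<in>I. f i)"
    using insert.hyps(2) by (intro sum.cong) auto
  then have "(\<Sum>i\<in>insert a I. (f(a := y)) i) = x"
    using insert.hyps yz f by simp
  moreover have "\<forall>i\<in>insert a I. (f(a := y)) i \<in> tv.span (S i)" using f yz by auto
  ultimately show ?case by metis
qed

lemma span_UN_eq:
  fixes B G :: "'i \<Rightarrow> ('c \<Rightarrow> 'a::field) set"
  assumes "\<And>i. i \<in> K \<Longrightarrow> B i \<subseteq> tv.span (G i) \<and> G i \<subseteq> tv.span (B i)"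
  shows "tv.span (\<Union>i\<in>K. B i) = tv.span (\<Union>i\<in>K. G i)"
proof -
  have "B i \<subseteq> tv.span (\<Union>i\<in>K. G i)" "G i \<subseteq> tv.span (\<Union>i\<in>K. B i)" if "i \<in> K" for i
    using assms[OF that] that tv.span_mono[of "B i" "\<Union>i\<in>K. B i"] tv.span_mono[of "G i" "\<Union>i\<in>K. G i"]
      span_subset_spanI[of "B i" "G i"] span_subset_spanI[of "G i" "B i"] by blast+
  then show ?thesis unfolding tv.span_eq by blast
qed

lemma independent_Un_if_span_inter_trivial:
  fixes A :: "('c \<Rightarrow> 'a::field) set"
  assumes "tv.independent A" "tv.independent B" "tv.span A \<inter> tv.span B \<subseteq> {0}"
  shows "tv.independent (A \<union> B)" "A \<inter> B = {}"
proof -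
  show "A \<inter> B = {}"
  proof (rule ccontr)
    assume "A \<inter> B \<noteq> {}"
    then obtain a where a: "a \<in> A" "a \<in> B" by blast
    then have "a \<in> tv.span A \<inter> tv.span B" using tv.span_base by blast
    then have "a = 0" using assms(3) by blast
    then show False using a(1) assms(1) tv.dependent_zero by blast
  qed
  show "tv.independent (A \<union> B)"
    unfolding tv.independent_explicit_module
  proof (intro allI impI)
    fix t u v
    assume t: "finite t" "t \<subseteq> A \<union> B" and sum0: "(\<Sum>v\<in>t. tscale (u v) v) = 0" and v: "v \<in> t"
    define y where "y = (\<Sum>v\<in>t \<inter> A. tscale (u v) v)"
    define z where "z = (\<Sum>v\<in>t - A. tscale (u v) v)"
    have "y + z = 0" unfolding y_def z_def using sum0 sum.Int_Diff[OF t(1), of _ A] by metis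
    then have y: "y = - z" by (simp add: eq_neg_iff_add_eq_0)
    have "y \<in> tv.span A"
      unfolding y_def by (intro tv.span_sum tv.span_scale tv.span_base) auto
    moreover have "z \<in> tv.span B"
      unfolding z_def using t(2) by (intro tv.span_sum tv.span_scale tv.span_base) auto
    moreover have "y \<in> tv.span B" unfolding y using \<open>z \<in> tv.span B\<close> by (rule tv.span_neg)
    ultimately have "y \<in> tv.span A \<inter> tv.span B" by blast
    then have "y = 0" using assms(3) by blast
    then have "z = 0" using y by simp
    show "u v = 0"
    proof (cases "v \<in> A")
      case True
      then have "t \<inter> A \<subseteq> A" "finite (t \<inter> A)" "v \<in> t \<inter> A" using t(1) v by auto
      then show ?thesis using tv.independentD[OF assms(1)] \<open>y = 0\<close> unfolding y_def by blast
    next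
      case False
      then have "t - A \<subseteq> B" "finite (t - A)" "v \<in> t - A" using t v by auto
      then show ?thesis using tv.independentD[OF assms(2)] \<open>z = 0\<close> unfolding z_def by blast
    qed
  qed
qed

lemma dim_Un_direct:
  fixes A :: "('c \<Rightarrow> 'a::field) set"
  assumes "finite A" "finite B" "tv.span A \<inter> tv.span B \<subseteq> {0}"
  shows "tv.dim (A \<union> B) = tv.dim A + tv.dim B"
proof -
  obtain BA where BA: "BA \<subseteq> A" "tv.independent BA" "A \<subseteq> tv.span BA" "card BA = tv.dim A" "finite BA"
    using finite_basisE[OF tv.span_superset assms(1)] by blast
  obtain BB where BB: "BB \<subseteq> B" "tv.independent BB" "B \<subseteq> tv.span BB" "card BB = tv.dim B" "finite BB"
    using finite_basisE[OF tv.span_superset assms(2)] by blast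
  have "tv.span BA \<inter> tv.span BB \<subseteq> {0}"
    using tv.span_mono[OF BA(1)] tv.span_mono[OF BB(1)] assms(3) by blast
  note BAB = independent_Un_if_span_inter_trivial[OF BA(2) BB(2) this]
  have "BA \<union> BB \<subseteq> tv.span (A \<union> B)"
    using BA(1) BB(1) tv.span_superset[of "A \<union> B"] by blast
  moreover have "A \<union> B \<subseteq> tv.span (BA \<union> BB)"
    using BA(3) BB(3) tv.span_mono[of BA "BA \<union> BB"] tv.span_mono[of BB "BA \<union> BB"] by blast
  ultimately have "tv.dim (A \<union> B) = card (BA \<union> BB)"
    using tv.dim_eq_card[OF _ BAB(1)] tv.span_eq by metis
  then show ?thesis using card_Un_disjoint[OF BA(5) BB(5) BAB(2)] BA(4) BB(4) by simp
qed

lemma in_span_others_if_relation: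
  fixes w :: "'i \<Rightarrow> 'c \<Rightarrow> 'a::field"
  assumes "finite E" "(\<Sum>e\<in>E. tscale (c e) (w e)) = 0" "e0 \<in> E" "c e0 \<noteq> 0"
  shows "w e0 \<in> tv.span (w ` (E - {e0}))"
proof -
  define r where "r = (\<Sum>e\<in>E - {e0}. tscale (c e) (w e))"
  have "tscale (c e0) (w e0) = - r"
    using assms(2) sum.remove[OF assms(1,3), of "\<lambda>e. tscale (c e) (w e)"]
    unfolding r_def by (simp add: eq_neg_iff_add_eq_0)
  then have "w e0 = tscale (inverse (c e0)) (- r)"
    using assms(4) by (metis tv.scale_scale tv.scale_one field_class.field_inverse)
  moreover have "tscale (inverse (c e0)) (- r) \<in> tv.span (w ` (E - {e0}))"
    unfolding r_def by (intro tv.span_scale tv.span_neg tv.span_sum tv.span_base) auto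
  ultimately show ?thesis by simp
qed

lemma dim_image_less_card_if_relation:
  fixes w :: "'i \<Rightarrow> 'c \<Rightarrow> 'a::field"
  assumes "finite E" "(\<Sum>e\<in>E. tscale (c e) (w e)) = 0" "e0 \<in> E" "c e0 \<noteq> 0"
  shows "tv.dim (w ` E) < card E"
proof -
  have "w ` E \<subseteq> tv.span (w ` (E - {e0}))"
    using in_span_others_if_relation[OF assms] by (auto intro: tv.span_base)
  then have "tv.dim (w ` E) \<le> card (w ` (E - {e0}))"
    using assms(1) by (intro tv.dim_le_card) auto
  also have "\<dots> \<le> card (E - {e0})" using assms(1) card_image_le by blast
  also have "\<dots> < card E" using assms(1,3) by (rule card_Diff1_less)
  finally show ?thesis .
qed

lemma image_subset_span_shifted:
  fixes r :: "'i \<Rightarrow> 'c \<Rightarrow> 'a::field"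
  assumes "l0 \<in> L"
  shows "r ` L \<subseteq> tv.span ((\<lambda>l. r l + tscale (c l) (r l0)) ` (L - {l0}) \<union> {r l0})"
proof
  fix x assume "x \<in> r ` L"
  then obtain l where l: "l \<in> L" "x = r l" by blast
  let ?S = "(\<lambda>l. r l + tscale (c l) (r l0)) ` (L - {l0}) \<union> {r l0}"
  show "x \<in> tv.span ?S"
  proof (cases "l = l0")
    case True
    then show ?thesis using l by (simp add: tv.span_base)
  next
    case False
    then have "(r l + tscale (c l) (r l0)) - tscale (c l) (r l0) \<in> tv.span ?S"
      using l by (intro tv.span_diff tv.span_scale tv.span_base) auto
    then show ?thesis using l by simp
  qed
qed

lemma dim_extension:
  fixes X Y :: "('c \<Rightarrow> 'a::field) set"
  assumes "finite X" "finite Y" "X \<subseteq> tv.span Y"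
  shows "\<exists>C. finite C \<and> card C + tv.dim X = tv.dim Y \<and> Y \<subseteq> tv.span (X \<union> C)"
proof -
  obtain BX where BX: "BX \<subseteq> X" "tv.independent BX" "card BX = tv.dim X" "finite BX"
    using finite_basisE[OF tv.span_superset assms(1)] by metis
  obtain B where B: "BX \<subseteq> B" "B \<subseteq> BX \<union> Y" "tv.independent B" "BX \<union> Y \<subseteq> tv.span B"
    using tv.maximal_independent_subset_extend[of BX "BX \<union> Y"] BX(2) by blast
  have "finite B" using B(2) BX(4) assms(2) finite_subset by blast
  have "tv.span B = tv.span Y"
    unfolding tv.span_eq using B(2,4) BX(1) assms(3) tv.span_superset[of Y] by blast
  then have "card B = tv.dim Y" using tv.dim_eq_card[OF _ B(3)] by metis
  moreover have "card (B - BX) + card BX = card B"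
    using card_Diff_subset[OF BX(4) B(1)] card_mono[OF \<open>finite B\<close> B(1)] by simp
  moreover have "Y \<subseteq> tv.span (X \<union> (B - BX))"
    using B(4) BX(1) span_subset_spanI[of B "X \<union> (B - BX)"] tv.span_superset[of "X \<union> (B - BX)"]
    by blast
  ultimately show ?thesis using \<open>finite B\<close> BX(3) by (intro exI[of _ "B - BX"]) auto
qed

lemma dim_UN_defect_mono:
  fixes X Y :: "'i \<Rightarrow> ('c \<Rightarrow> 'a::field) set"
  assumes "finite K" "\<And>i. i \<in> K \<Longrightarrow> finite (X i) \<and> finite (Y i) \<and> X i \<subseteq> tv.span (Y i)"
  shows "tv.dim (\<Union>i\<in>K. Y i) + (\<Sum>i\<in>K. tv.dim (X i)) \<le> tv.dim (\<Union>i\<in>K. X i) + (\<Sum>i\<in>K. tv.dim (Y i))"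
proof -
  obtain C where C: "\<And>i. i \<in> K \<Longrightarrow> finite (C i) \<and> card (C i) + tv.dim (X i) = tv.dim (Y i)
      \<and> Y i \<subseteq> tv.span (X i \<union> C i)"
    using bchoice[of K
        "\<lambda>i C. finite C \<and> card C + tv.dim (X i) = tv.dim (Y i) \<and> Y i \<subseteq> tv.span (X i \<union> C)"]
      dim_extension assms(2) by metis
  have fin: "finite (\<Union>i\<in>K. X i)" "finite (\<Union>i\<in>K. C i)" using assms C by auto
  have "(\<Union>i\<in>K. Y i) \<subseteq> tv.span ((\<Union>i\<in>K. X i) \<union> (\<Union>i\<in>K. C i))"
    using C tv.span_mono[of "X _ \<union> C _" "(\<Union>i\<in>K. X i) \<union> (\<Union>i\<in>K. C i)"] by blast
  then have "tv.dim (\<Union>i\<in>K. Y i) \<le> tv.dim ((\<Union>i\<in>K. X i) \<union> (\<Union>i\<in>K. C i))"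
    using fin by (intro dim_le_if_subset_span) auto
  also have "\<dots> \<le> tv.dim (\<Union>i\<in>K. X i) + card (\<Union>i\<in>K. C i)" by (rule dim_Un_le_card[OF fin])
  also have "card (\<Union>i\<in>K. C i) \<le> (\<Sum>i\<in>K. card (C i))" by (rule card_UN_le[OF assms(1)])
  finally have "tv.dim (\<Union>i\<in>K. Y i) \<le> tv.dim (\<Union>i\<in>K. X i) + (\<Sum>i\<in>K. card (C i))" by simp
  moreover have "(\<Sum>i\<in>K. card (C i)) + (\<Sum>i\<in>K. tv.dim (X i)) = (\<Sum>i\<in>K. tv.dim (Y i))"
    using C by (simp add: sum.distrib[symmetric])
  ultimately show ?thesis by linarith
qed

section \<open>Non-splitting families and direct-sum decompositions\<close>

definition nonsplit :: "('e \<Rightarrow> 'c \<Rightarrow> 'a::field) \<Rightarrow> 'e set \<Rightarrow> bool" where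
  "nonsplit w E \<longleftrightarrow>
     (\<forall>Y. Y \<subseteq> E \<and> Y \<noteq> {} \<and> Y \<noteq> E \<longrightarrow> \<not> tv.span (w ` Y) \<inter> tv.span (w ` (E - Y)) \<subseteq> {0})"

definition independent_parts :: "('e \<Rightarrow> 'c \<Rightarrow> 'a::field) \<Rightarrow> 'e set set \<Rightarrow> bool" where
  "independent_parts w P \<longleftrightarrow>
     (\<forall>f. (\<forall>C\<in>P. f C \<in> tv.span (w ` C)) \<and> (\<Sum>C\<in>P. f C) = 0 \<longrightarrow> (\<forall>C\<in>P. f C = 0))"

lemma partition_on_Un:
  "partition_on A P \<Longrightarrow> partition_on B Q \<Longrightarrow> A \<inter> B = {} \<Longrightarrow> partition_on (A \<union> B) (P \<union> Q)"
  by (auto simp: partition_on_def intro!: disjoint_union)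

lemma partition_on_Diff_part:
  assumes "partition_on A P" "C \<in> P"
  shows "partition_on (A - C) (P - {C})"
proof -
  have "disjnt C (\<Union>(P - {C}))"
    using partition_onD2[OF assms(1)] assms(2) by (auto simp: disjnt_def disjoint_def)
  moreover have "insert C (P - {C}) = P" using assms(2) by blast
  ultimately show ?thesis using partition_on_insert[of C "P - {C}" A] assms(1) by simp
qed

lemma independent_parts_subset:
  assumes "independent_parts w P" "Q \<subseteq> P" "finite P"
  shows "independent_parts w Q"
  unfolding independent_parts_def
proof (intro allI impI)
  fix f assume f: "(\<forall>C\<in>Q. f C \<in> tv.span (w ` C)) \<and> (\<Sum>C\<in>Q. f C) = 0"
  define f' where "f' C = (if C \<in> Q then f C else 0)" for C
  have "\<forall>C\<in>P. f' C \<in> tv.span (w ` C)" using f tv.span_zero by (auto simp: f'_def)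
  moreover have "(\<Sum>C\<in>P. f' C) = 0"
    using f sum.inter_restrict[OF assms(3), of f Q] assms(2) by (simp add: f'_def Int_absorb1)
  ultimately have "\<forall>C\<in>P. f' C = 0" using assms(1) unfolding independent_parts_def by blast
  then show "\<forall>C\<in>Q. f C = 0" using assms(2) unfolding f'_def by (metis subsetD)
qed

lemma independent_parts_span_inter:
  assumes "independent_parts w P" "finite P" "C \<in> P"
  shows "tv.span (w ` C) \<inter> tv.span (w ` \<Union>(P - {C})) \<subseteq> {0}"
proof
  fix x assume x: "x \<in> tv.span (w ` C) \<inter> tv.span (w ` \<Union>(P - {C}))"
  have "w ` \<Union>(P - {C}) = (\<Union>C'\<in>P - {C}. w ` C')" by auto
  then obtain f where f: "\<forall>C'\<in>P - {C}. f C' \<in> tv.span (w ` C')" "x = (\<Sum>C'\<in>P - {C}. f C')"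
    using in_span_UN_sum[of "P - {C}" x "\<lambda>C'. w ` C'"] x assms(2) by auto
  define f' where "f' = f(C := - x)"
  have "\<forall>C'\<in>P. f' C' \<in> tv.span (w ` C')" using f x tv.span_neg by (auto simp: f'_def)
  moreover have "(\<Sum>C'\<in>P. f' C') = 0"
  proof -
    have "(\<Sum>C'\<in>P - {C}. f' C') = x" unfolding f(2) by (intro sum.cong) (auto simp: f'_def)
    then show ?thesis using sum.remove[OF assms(2,3), of f'] by (simp add: f'_def)
  qed
  ultimately have "f' C = 0" using assms(1,3) unfolding independent_parts_def by blast
  then show "x \<in> {0}" by (simp add: f'_def)
qed

lemma independent_parts_Un:
  assumes "independent_parts w P" "independent_parts w Q" "partition_on A P" "partition_on B Q"
    "finite P" "finite Q" "A \<inter> B = {}" "tv.span (w ` A) \<inter> tv.span (w ` B) \<subseteq> {0}"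
  shows "independent_parts w (P \<union> Q)"
  unfolding independent_parts_def
proof (intro allI impI)
  fix f assume f: "(\<forall>C\<in>P \<union> Q. f C \<in> tv.span (w ` C)) \<and> (\<Sum>C\<in>P \<union> Q. f C) = 0"
  have "P \<inter> Q = {}"
  proof (rule ccontr)
    assume "P \<inter> Q \<noteq> {}"
    then obtain C where "C \<in> P" "C \<in> Q" by blast
    then have "C \<subseteq> A \<inter> B" "C \<noteq> {}"
      using partition_onD1[OF assms(3)] partition_onD1[OF assms(4)] partition_onD3[OF assms(3)]
        by auto
    then show False using assms(7) by blast
  qed
  then have "(\<Sum>C\<in>P \<union> Q. f C) = (\<Sum>C\<in>P. f C) + (\<Sum>C\<in>Q. f C)"
    by (rule sum.union_disjoint[OF assms(5,6)])
  then have sum0: "(\<Sum>C\<in>P. f C) + (\<Sum>C\<in>Q. f C) = 0" using f by simp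
  have "(\<Sum>C\<in>P. f C) \<in> tv.span (w ` A)"
    using f partition_onD1[OF assms(3)] tv.span_mono[of "w ` _" "w ` A"]
    by (intro tv.span_sum) blast
  moreover have "(\<Sum>C\<in>Q. f C) \<in> tv.span (w ` B)"
    using f partition_onD1[OF assms(4)] tv.span_mono[of "w ` _" "w ` B"]
    by (intro tv.span_sum) blast
  moreover have "(\<Sum>C\<in>P. f C) = - (\<Sum>C\<in>Q. f C)" using sum0 by (simp add: eq_neg_iff_add_eq_0)
  ultimately have "(\<Sum>C\<in>P. f C) \<in> tv.span (w ` A) \<inter> tv.span (w ` B)"
    using tv.span_neg by auto
  then have "(\<Sum>C\<in>P. f C) = 0" "(\<Sum>C\<in>Q. f C) = 0" using assms(8) sum0 by auto
  then show "\<forall>C\<in>P \<union> Q. f C = 0"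
    using assms(1,2) f unfolding independent_parts_def by blast
qed

lemma dim_UN_independent_parts:
  assumes "finite P" "\<forall>C\<in>P. finite C" "independent_parts w P"
  shows "tv.dim (w ` \<Union>P) = (\<Sum>C\<in>P. tv.dim (w ` C))"
  using assms
proof (induction P rule: finite_induct)
  case empty
  then show ?case using tv.dim_le_card'[of "{}"] by simp
next
  case (insert C P)
  have "independent_parts w P"
    using independent_parts_subset[OF insert.prems(2)] insert.hyps(1) by blast
  then have IH: "tv.dim (w ` \<Union>P) = (\<Sum>C\<in>P. tv.dim (w ` C))"
    using insert.IH insert.prems(1) by blast
  have "tv.span (w ` C) \<inter> tv.span (w ` \<Union>P) \<subseteq> {0}"
    using independent_parts_span_inter[OF insert.prems(2) finite.insertI[OF insert.hyps(1)]
        insertI1]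
      insert.hyps(2) by (simp add: Diff_insert_absorb)
  then have "tv.dim (w ` \<Union>(insert C P)) = tv.dim (w ` C) + tv.dim (w ` \<Union>P)"
    using dim_Un_direct[of "w ` C" "w ` \<Union>P"] insert.prems(1) insert.hyps(1) by (simp add: image_Un)
  then show ?case using IH insert.hyps by simp
qed

lemma nonsplit_decomposition:
  assumes "finite E"
  obtains P where "partition_on E P" "\<forall>C\<in>P. nonsplit w C" "independent_parts w P"
  using assms
proof (induction "card E" arbitrary: E thesis rule: less_induct)
  case less
  show ?case
  proof (cases "nonsplit w E")
    case True
    show ?thesis
    proof (cases "E = {}")
      case True
      then show ?thesis
        using less.prems(1)[of "{}"] by (simp add: partition_on_empty independent_parts_def)
    next
      case False
      then show ?thesis using less.prems(1)[of "{E}"] \<open>nonsplit w E\<close>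
        by (simp add: partition_on_space independent_parts_def)
    qed
  next
    case False
    then obtain Y where Y: "Y \<subseteq> E" "Y \<noteq> {}" "Y \<noteq> E"
      "tv.span (w ` Y) \<inter> tv.span (w ` (E - Y)) \<subseteq> {0}"
      unfolding nonsplit_def by blast
    have fin: "finite Y" "finite (E - Y)" using less.prems(2) Y(1) finite_subset by auto
    have "card Y < card E" "card (E - Y) < card E"
      using Y(1-3) less.prems(2) by (auto intro: psubset_card_mono)
    obtain P1 where
      P1: "partition_on Y P1" "\<forall>C\<in>P1. nonsplit w C" "independent_parts w P1"
      by (rule less.hyps[OF \<open>card Y < card E\<close> _ fin(1)])
    obtain P2 where
      P2: "partition_on (E - Y) P2" "\<forall>C\<in>P2. nonsplit w C" "independent_parts w P2"
      by (rule less.hyps[OF \<open>card (E - Y) < card E\<close> _ fin(2)])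
    have "partition_on E (P1 \<union> P2)"
      using partition_on_Un[OF P1(1) P2(1)] Y(1) by (simp add: Un_Diff_cancel Un_absorb1)
    moreover have "independent_parts w (P1 \<union> P2)"
      using independent_parts_Un[OF P1(3) P2(3) P1(1) P2(1) _ _ _ Y(4)] fin
        finite_elements P1(1) P2(1)
      by blast
    ultimately show ?thesis using less.prems(1) P1(2) P2(2) by blast
  qed
qed

lemma nonsplit_in_span_others:
  assumes "nonsplit w E" "e \<in> E" "E \<noteq> {e}"
  shows "w e \<in> tv.span (w ` (E - {e}))"
proof -
  have "\<not> tv.span (w ` {e}) \<inter> tv.span (w ` (E - {e})) \<subseteq> {0}"
    using assms unfolding nonsplit_def by blast
  then obtain x where x: "x \<in> tv.span {w e}" "x \<in> tv.span (w ` (E - {e}))" "x \<noteq> 0" by auto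
  then obtain k where k: "x = tscale k (w e)" using tv.span_singleton by auto
  then have "k \<noteq> 0" using x(3) by auto
  then have "w e = tscale (inverse k) x" using k by (simp add: tv.scale_scale)
  then show ?thesis using x(2) tv.span_scale by metis
qed

lemma nonsplit_parts_nonzero:
  assumes "nonsplit w E" "e \<in> E" "partition_on (E - {e}) P" "independent_parts w P" "finite P"
    "\<forall>C\<in>P. p C \<in> tv.span (w ` C)" "w e = (\<Sum>C\<in>P. p C)" "C \<in> P"
  shows "p C \<noteq> 0"
proof
  assume "p C = 0"
  define R where "R = \<Union>(P - {C})"
  have R: "R = E - {e} - C"
    using partition_onD1[OF partition_on_Diff_part[OF assms(3,8)]] unfolding R_def by simp
  have "w e = (\<Sum>C'\<in>P - {C}. p C')"
    using assms(7) sum.remove[OF assms(5,8), of p] \<open>p C = 0\<close> by simp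
  also have "\<dots> \<in> tv.span (w ` R)"
    using assms(6) tv.span_mono[of "w ` _" "w ` R"] unfolding R_def by (intro tv.span_sum) blast
  finally have "w ` (E - C) \<subseteq> tv.span (w ` R)"
    using tv.span_superset[of "w ` R"] assms(2) unfolding R by blast
  then have "tv.span (w ` (E - C)) \<subseteq> tv.span (w ` R)" by (rule span_subset_spanI)
  then have "tv.span (w ` C) \<inter> tv.span (w ` (E - C)) \<subseteq> {0}"
    using independent_parts_span_inter[OF assms(4,5,8)] unfolding R_def by blast
  moreover have "C \<subseteq> E" "C \<noteq> {}" "e \<notin> C"
    using partition_onD1[OF assms(3)] partition_onD3[OF assms(3)] assms(8) by auto
  moreover have "C \<noteq> E" using \<open>e \<notin> C\<close> assms(2) by blast
  ultimately show False using assms(1) unfolding nonsplit_def by blast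
qed

lemma nonsplit_right_factors:
  fixes g s :: "'e \<Rightarrow> ('b, 'a::field) tensor"
  assumes "X \<inter> Y = {}" "\<forall>e\<in>E. supported_on Y (s e)" "nonsplit (\<lambda>e. outer X Y (g e) (s e)) E"
  shows "nonsplit s E"
  unfolding nonsplit_def
proof (intro allI impI notI)
  fix E1 assume E1: "E1 \<subseteq> E \<and> E1 \<noteq> {} \<and> E1 \<noteq> E"
    and split: "tv.span (s ` E1) \<inter> tv.span (s ` (E - E1)) \<subseteq> {0}"
  define w where "w = (\<lambda>e. outer X Y (g e) (s e))"
  have supp: "\<forall>e\<in>E1. supported_on Y (s e)" "\<forall>e\<in>E - E1. supported_on Y (s e)"
    using assms(2) E1 by auto
  have "x = 0" if x: "x \<in> tv.span (w ` E1)" "x \<in> tv.span (w ` (E - E1))" for x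
  proof (rule eq_0_if_slices_eq_0)
    have "supported_on (X \<union> Y) x"
      by (rule supported_on_span[OF _ x(1)]) (auto simp: w_def supported_on_outer)
    then show "supported_on (Y \<union> X) x" by (simp add: Un_commute)
    fix \<iota> :: "nat \<Rightarrow> 'b" assume \<iota>: "\<iota> \<in> extensional X"
    have "slice Y x \<iota> \<in> tv.span (s ` E1)"
      using slice_in_span_right[OF assms(1) supp(1) x(1)[unfolded w_def] \<iota>] .
    moreover have "slice Y x \<iota> \<in> tv.span (s ` (E - E1))"
      using slice_in_span_right[OF assms(1) supp(2) x(2)[unfolded w_def] \<iota>] .
    ultimately show "slice Y x \<iota> = 0" using split by blast
  qed
  then have "tv.span (w ` E1) \<inter> tv.span (w ` (E - E1)) \<subseteq> {0}" by blast
  moreover have "nonsplit w E" using assms(3) unfolding w_def .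
  ultimately show False using E1 unfolding nonsplit_def by blast
qed

section \<open>Vanishing sums of tensors\<close>

lemma outer_expansion:
  fixes x :: "('b, 'a::field) tensor"
  assumes "supported_on (X \<union> Y) x" "finite \<beta>" "tv.independent \<beta>"
    "\<forall>\<kappa>\<in>extensional Y. slice X x \<kappa> \<in> tv.span \<beta>"
  obtains r where "\<forall>g. supported_on Y (r g)" "x = (\<Sum>g\<in>\<beta>. outer X Y g (r g))"
proof
  define r where
    "r g \<kappa> = (if \<kappa> \<in> extensional Y then tv.representation \<beta> (slice X x \<kappa>) g else 0)" for g \<kappa>
  show "\<forall>g. supported_on Y (r g)" by (simp add: supported_on_def r_def)
  show "x = (\<Sum>g\<in>\<beta>. outer X Y g (r g))"
  proof
    fix \<iota>
    show "x \<iota> = (\<Sum>g\<in>\<beta>. outer X Y g (r g)) \<iota>"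
    proof (cases "\<iota> \<in> extensional (X \<union> Y)")
      case True
      define \<kappa> where "\<kappa> = restrict \<iota> Y"
      define c where "c = tv.representation \<beta> (slice X x \<kappa>)"
      have "\<kappa> \<in> extensional Y" unfolding \<kappa>_def by simp
      then have "slice X x \<kappa> = (\<Sum>g\<in>\<beta>. tscale (c g) g)"
        unfolding c_def using tv.sum_representation_eq[OF assms(3) _ assms(2) order_refl] assms(4)
        by simp
      moreover have "x \<iota> = slice X x \<kappa> (restrict \<iota> X)"
        using True by (simp add: slice_def \<kappa>_def merge_index_restrict)
      ultimately have "x \<iota> = (\<Sum>g\<in>\<beta>. c g * g (restrict \<iota> X))"
        by (simp add: sum_apply tscale_apply)
      moreover have "(\<Sum>g\<in>\<beta>. outer X Y g (r g)) \<iota> = (\<Sum>g\<in>\<beta>. g (restrict \<iota> X) * c g)"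
        using True by (simp add: sum_apply outer_def r_def c_def \<kappa>_def)
      ultimately show ?thesis by (simp add: mult.commute)
    next
      case False
      then show ?thesis using assms(1) by (simp add: supported_on_def sum_apply outer_def)
    qed
  qed
qed

lemma outer_relation_coeffs_zero:
  fixes g r :: "'i \<Rightarrow> ('b, 'a::field) tensor"
  assumes "X \<inter> Y = {}" "finite L" "\<forall>l\<in>L. supported_on X (g l) \<and> supported_on Y (r l)"
    "(\<Sum>l\<in>L. outer X Y (g l) (r l)) = 0" "\<forall>l\<in>L. g l \<notin> tv.span (g ` (L - {l}))"
  shows "\<forall>l\<in>L. r l = 0"
proof (intro ballI ext)
  fix l \<kappa> assume l: "l \<in> L"
  show "r l \<kappa> = 0 \<kappa>"
  proof (cases "\<kappa> \<in> extensional Y")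
    case True
    have "(\<Sum>l\<in>L. tscale (r l \<kappa>) (g l)) = slice X (\<Sum>l\<in>L. outer X Y (g l) (r l)) \<kappa>"
      unfolding slice_sum
      by (intro sum.cong refl) (use assms(3) in \<open>auto simp: slice_outer[OF assms(1) _ True]\<close>)
    also have "\<dots> = 0" using assms(4) by simp
    finally show ?thesis
      using in_span_others_if_relation[OF assms(2) _ l] assms(5) l by fastforce
  next
    case False
    then show ?thesis using assms(3) l by (simp add: supported_on_def)
  qed
qed

lemma outer_relation_eliminate:
  fixes g r :: "'i \<Rightarrow> ('b, 'a::field) tensor"
  assumes "finite L" "l0 \<in> L" "g l0 = (\<Sum>l\<in>L - {l0}. tscale (c l) (g l))"
    "(\<Sum>l\<in>L. outer X Y (g l) (r l)) = 0"
  shows "(\<Sum>l\<in>L - {l0}. outer X Y (g l) (r l + tscale (c l) (r l0))) = 0"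
proof -
  have "(\<Sum>l\<in>L - {l0}. outer X Y (g l) (r l + tscale (c l) (r l0)))
      = (\<Sum>l\<in>L - {l0}. outer X Y (g l) (r l)) + (\<Sum>l\<in>L - {l0}. outer X Y (tscale (c l) (g l)) (r l0))"
    by (simp add: outer_add_right outer_scale_right outer_scale_left sum.distrib)
  also have "(\<Sum>l\<in>L - {l0}. outer X Y (tscale (c l) (g l)) (r l0)) = outer X Y (g l0) (r l0)"
    unfolding assms(3) outer_sum_left ..
  also have "(\<Sum>l\<in>L - {l0}. outer X Y (g l) (r l)) + outer X Y (g l0) (r l0) = 0"
    using sum.remove[OF assms(1,2), of "\<lambda>l. outer X Y (g l) (r l)"] assms(4)
      by (simp add: add.commute)
  finally show ?thesis .
qed

lemma outer_relation_dim_bound: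
  fixes g r :: "'i \<Rightarrow> ('b, 'a::field) tensor"
  assumes "X \<inter> Y = {}" "finite L" "\<forall>l\<in>L. supported_on X (g l) \<and> supported_on Y (r l)"
    "(\<Sum>l\<in>L. outer X Y (g l) (r l)) = 0"
  shows "tv.dim (r ` L) + tv.dim (g ` L) \<le> card L"
  using assms(2-)
proof (induction "card L" arbitrary: L r rule: less_induct)
  case less
  show ?case
  proof (cases "\<exists>l0\<in>L. g l0 \<in> tv.span (g ` (L - {l0}))")
    case False
    then have "r ` L \<subseteq> tv.span {}"
      using outer_relation_coeffs_zero[OF assms(1) less.prems] tv.span_zero by auto
    then have "tv.dim (r ` L) = 0" using tv.dim_le_card[of "r ` L" "{}"] by simp
    moreover have "tv.dim (g ` L) \<le> card L"
      using tv.dim_le_card'[of "g ` L"] card_image_le[of L g] less.prems(1) by simp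
    ultimately show ?thesis by simp
  next
    case True
    then obtain l0 where l0: "l0 \<in> L" "g l0 \<in> tv.span (g ` (L - {l0}))" by blast
    define L' where "L' = L - {l0}"
    have L': "finite L'" "card L' < card L" "card L = Suc (card L')"
      unfolding L'_def using less.prems(1) card_Diff1_less[OF less.prems(1) l0(1)]
        card.remove[OF less.prems(1) l0(1)] by simp_all
    obtain c where c: "g l0 = (\<Sum>l\<in>L'. tscale (c l) (g l))"
      using in_span_image_sum[OF L'(1) l0(2)[folded L'_def]] by blast
    define r' where "r' l = r l + tscale (c l) (r l0)" for l
    have supp: "\<forall>l\<in>L'. supported_on X (g l) \<and> supported_on Y (r' l)"
      using less.prems(2) l0(1) unfolding r'_def L'_def
      by (simp add: supported_on_add supported_on_scale)
    have rel: "(\<Sum>l\<in>L'. outer X Y (g l) (r' l)) = 0"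
      unfolding r'_def L'_def
      by (rule outer_relation_eliminate[OF less.prems(1) l0(1) c[unfolded L'_def] less.prems(3)])
    have IH: "tv.dim (r' ` L') + tv.dim (g ` L') \<le> card L'"
      by (rule less.hyps[OF L'(2,1) supp rel])
    have "r ` L \<subseteq> tv.span (r' ` L' \<union> {r l0})"
      unfolding r'_def L'_def by (rule image_subset_span_shifted[OF l0(1)])
    then have "tv.dim (r ` L) \<le> tv.dim (r' ` L' \<union> {r l0})"
      using L'(1) by (intro dim_le_if_subset_span) auto
    also have "\<dots> \<le> tv.dim (r' ` L') + 1"
      using dim_Un_le_card[of "r' ` L'" "{r l0}"] L'(1) by simp
    finally have "tv.dim (r ` L) \<le> tv.dim (r' ` L') + 1" .
    moreover have "g ` L \<subseteq> tv.span (g ` L')"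
      using l0(2) tv.span_superset[of "g ` L'"] by (auto simp: L'_def)
    then have "tv.dim (g ` L) \<le> tv.dim (g ` L')" using dim_le_if_subset_span L'(1) by blast
    ultimately show ?thesis using IH L'(3) by linarith
  qed
qed

lemma outer_expansion_in_basis:
  fixes q :: "('b, 'a::field) tensor"
  assumes "supported_on (X \<union> Y) q" "finite G" "\<forall>\<kappa>\<in>extensional Y. slice X q \<kappa> \<in> tv.span G"
  shows "\<exists>\<beta> r. \<beta> \<subseteq> G \<and> G \<subseteq> tv.span \<beta> \<and> card \<beta> = tv.dim G \<and> finite \<beta>
    \<and> (\<forall>g. supported_on Y (r g)) \<and> q = (\<Sum>g\<in>\<beta>. outer X Y g (r g))"
proof -
  obtain \<beta> where \<beta>: "\<beta> \<subseteq> G" "tv.independent \<beta>" "G \<subseteq> tv.span \<beta>" "card \<beta> = tv.dim G" "finite \<beta>"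
    using finite_basisE[OF tv.span_superset assms(2)] by blast
  have "\<forall>\<kappa>\<in>extensional Y. slice X q \<kappa> \<in> tv.span \<beta>"
    using assms(3) span_subset_spanI[OF \<beta>(3)] by blast
  then obtain r where "\<forall>g. supported_on Y (r g)" "q = (\<Sum>g\<in>\<beta>. outer X Y g (r g))"
    by (rule outer_expansion[OF assms(1) \<beta>(5,2)])
  with \<beta> show ?thesis by blast
qed

lemma outer_expansions_in_bases:
  fixes q :: "'i \<Rightarrow> ('b, 'a::field) tensor"
  assumes "\<forall>i\<in>K. supported_on (X \<union> Y) (q i) \<and> finite (G i)
    \<and> (\<forall>\<kappa>\<in>extensional Y. slice X (q i) \<kappa> \<in> tv.span (G i))"
  shows "\<exists>\<beta> r. \<forall>i\<in>K. \<beta> i \<subseteq> G i \<and> G i \<subseteq> tv.span (\<beta> i)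
    \<and> card (\<beta> i) = tv.dim (G i) \<and> finite (\<beta> i) \<and> (\<forall>g. supported_on Y (r i g))
    \<and> q i = (\<Sum>g\<in>\<beta> i. outer X Y g (r i g))"
proof -
  define P where "P i \<beta> r \<longleftrightarrow> \<beta> \<subseteq> G i \<and> G i \<subseteq> tv.span \<beta> \<and> card \<beta> = tv.dim (G i) \<and> finite \<beta>
    \<and> (\<forall>g. supported_on Y (r g)) \<and> q i = (\<Sum>g\<in>\<beta>. outer X Y g (r g))" for i \<beta> r
  have "\<forall>i\<in>K. \<exists>\<beta> r. P i \<beta> r"
  proof
    fix i assume "i \<in> K"
    then have "supported_on (X \<union> Y) (q i)" "finite (G i)"
      "\<forall>\<kappa>\<in>extensional Y. slice X (q i) \<kappa> \<in> tv.span (G i)"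
      using assms by blast+
    then show "\<exists>\<beta> r. P i \<beta> r" unfolding P_def by (rule outer_expansion_in_basis)
  qed
  then obtain \<beta> where "\<forall>i\<in>K. \<exists>r. P i (\<beta> i) r"
    using bchoice[of K "\<lambda>i \<beta>. \<exists>r. P i \<beta> r"] by blast
  then obtain r where "\<forall>i\<in>K. P i (\<beta> i) (r i)"
    using bchoice[of K "\<lambda>i r. P i (\<beta> i) r"] by blast
  then show ?thesis unfolding P_def by blast
qed

text \<open>Expanding each \<open>q i\<close> in a basis of \<open>G i\<close> turns \<open>\<Sum>i. q i = 0\<close> into a single relation
  \<open>\<Sum>(i, g). g \<otimes> r i g = 0\<close>, to which \<open>outer_relation_dim_bound\<close> applies.\<close>

lemma vanishing_sum_slices_dim_bound:
  fixes q :: "'i \<Rightarrow> ('b, 'a::field) tensor" and G :: "'i \<Rightarrow> ('b, 'a) tensor set"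
  assumes "X \<inter> Y = {}" "finite K" "(\<Sum>i\<in>K. q i) = 0"
    and "\<And>i. i \<in> K \<Longrightarrow> supported_on (X \<union> Y) (q i) \<and> finite (G i) \<and> (\<forall>g\<in>G i. supported_on X g)
       \<and> (\<forall>\<kappa>\<in>extensional Y. slice X (q i) \<kappa> \<in> tv.span (G i))"
  shows "tv.dim (\<Union>i\<in>K. {slice Y (q i) \<iota> | \<iota>. \<iota> \<in> extensional X}) + tv.dim (\<Union>i\<in>K. G i)
    \<le> (\<Sum>i\<in>K. tv.dim (G i))"
proof -
  have "\<forall>i\<in>K. supported_on (X \<union> Y) (q i) \<and> finite (G i)
      \<and> (\<forall>\<kappa>\<in>extensional Y. slice X (q i) \<kappa> \<in> tv.span (G i))"
    using assms(4) by blast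
  from outer_expansions_in_bases[OF this] obtain \<beta> r where
    "\<forall>i\<in>K. \<beta> i \<subseteq> G i \<and> G i \<subseteq> tv.span (\<beta> i) \<and> card (\<beta> i) = tv.dim (G i) \<and> finite (\<beta> i)
      \<and> (\<forall>g. supported_on Y (r i g)) \<and> q i = (\<Sum>g\<in>\<beta> i. outer X Y g (r i g))"
    by (elim exE) (rule that)
  then have \<beta>: "\<beta> i \<subseteq> G i" "G i \<subseteq> tv.span (\<beta> i)" "card (\<beta> i) = tv.dim (G i)"
    "finite (\<beta> i)" "\<forall>g. supported_on Y (r i g)" "q i = (\<Sum>g\<in>\<beta> i. outer X Y g (r i g))"
    if "i \<in> K" for i
    using that by blast+
  define L where "L = Sigma K \<beta>"
  have "finite L" unfolding L_def using assms(2) \<beta>(4) by blast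
  have "(\<Sum>l\<in>L. outer X Y (snd l) (case_prod r l)) = (\<Sum>i\<in>K. \<Sum>g\<in>\<beta> i. outer X Y g (r i g))"
    unfolding L_def using assms(2) \<beta>(4)
      by (subst sum.Sigma) (auto intro!: sum.cong split: prod.splits)
  also have "\<dots> = 0" using assms(3) \<beta>(6) by simp
  finally have rel: "(\<Sum>l\<in>L. outer X Y (snd l) (case_prod r l)) = 0" .
  have "supported_on X (snd l) \<and> supported_on Y (case_prod r l)" if lL: "l \<in> L" for l
  proof -
    obtain i g where l: "l = (i, g)" "i \<in> K" "g \<in> \<beta> i" using lL unfolding L_def by blast
    then show ?thesis using assms(4)[OF l(2)] \<beta>(1,5)[OF l(2)] by auto
  qed
  then have "tv.dim (case_prod r ` L) + tv.dim (snd ` L) \<le> card L"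
    using outer_relation_dim_bound[OF assms(1) \<open>finite L\<close> _ rel] by blast
  moreover have "card L = (\<Sum>i\<in>K. tv.dim (G i))"
    unfolding L_def using assms(2) \<beta>(3,4) by (subst card_SigmaI) auto
  moreover have "tv.dim (snd ` L) = tv.dim (\<Union>i\<in>K. G i)"
  proof -
    have "snd ` L = (\<Union>i\<in>K. \<beta> i)" unfolding L_def by force
    moreover have "\<beta> i \<subseteq> tv.span (G i) \<and> G i \<subseteq> tv.span (\<beta> i)" if "i \<in> K" for i
      using \<beta>(1,2)[OF that] tv.span_superset[of "G i"] by blast
    ultimately have "tv.span (snd ` L) = tv.span (\<Union>i\<in>K. G i)" using span_UN_eq[of K \<beta> G] by simp
    then show ?thesis by (rule tv.span_eq_dim)
  qed
  moreover have "(\<Union>i\<in>K. {slice Y (q i) \<iota> | \<iota>. \<iota> \<in> extensional X}) \<subseteq> tv.span (case_prod r ` L)"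
  proof clarify
    fix i and \<iota> :: "nat \<Rightarrow> 'b" assume i: "i \<in> K" and \<iota>: "\<iota> \<in> extensional X"
    have "slice Y (q i) \<iota> = (\<Sum>g\<in>\<beta> i. tscale (g \<iota>) (r i g))"
      unfolding \<beta>(6)[OF i] slice_sum using \<beta>(5)[OF i]
      by (intro sum.cong refl slice_outer_right[OF assms(1) _ \<iota>]) blast
    also have "\<dots> \<in> tv.span (case_prod r ` L)"
      using i unfolding L_def by (intro tv.span_sum tv.span_scale tv.span_base) force
    finally show "slice Y (q i) \<iota> \<in> tv.span (case_prod r ` L)" .
  qed
  then have "tv.dim (\<Union>i\<in>K. {slice Y (q i) \<iota> | \<iota>. \<iota> \<in> extensional X}) \<le> tv.dim (case_prod r ` L)"
    using dim_le_if_subset_span \<open>finite L\<close> by blast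
  ultimately show ?thesis by linarith
qed

text \<open>The coordinate form of \<open>q \<in> span A \<otimes> span B\<close>.\<close>

definition in_outer_span ::
  "nat set \<Rightarrow> nat set \<Rightarrow> ('b, 'a::field) tensor set \<Rightarrow> ('b, 'a) tensor set \<Rightarrow> ('b, 'a) tensor \<Rightarrow> bool"
  where
  "in_outer_span X Y A B q \<longleftrightarrow> supported_on (X \<union> Y) q \<and>
     (\<forall>\<kappa>\<in>extensional Y. slice X q \<kappa> \<in> tv.span A) \<and> (\<forall>\<iota>\<in>extensional X. slice Y q \<iota> \<in> tv.span B)"

lemma in_outer_span_if_in_span_outer:
  fixes g s :: "'e \<Rightarrow> ('b, 'a::field) tensor"
  assumes "X \<inter> Y = {}" "\<forall>c\<in>C. supported_on X (g c) \<and> supported_on Y (s c)"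
    "q \<in> tv.span ((\<lambda>c. outer X Y (g c) (s c)) ` C)"
  shows "in_outer_span X Y (g ` C) (s ` C) q"
  unfolding in_outer_span_def
proof (intro conjI ballI)
  show "supported_on (X \<union> Y) q"
    by (rule supported_on_span[OF _ assms(3)]) (auto simp: supported_on_outer)
  show "slice X q \<kappa> \<in> tv.span (g ` C)" if "\<kappa> \<in> extensional Y" for \<kappa>
    using slice_in_span_left[OF assms(1) _ assms(3) that] assms(2) by blast
  show "slice Y q \<iota> \<in> tv.span (s ` C)" if "\<iota> \<in> extensional X" for \<iota>
    using slice_in_span_right[OF assms(1) _ assms(3) that] assms(2) by blast
qed

lemma vanishing_sum_dim_bound:
  fixes q :: "'i \<Rightarrow> ('b, 'a::field) tensor" and A B :: "'i \<Rightarrow> ('b, 'a) tensor set"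
  assumes "X \<inter> Y = {}" "finite K" "(\<Sum>i\<in>K. q i) = 0"
    and "\<And>i. i \<in> K \<Longrightarrow> q i \<noteq> 0 \<and> finite (A i) \<and> finite (B i) \<and> (\<forall>g\<in>A i. supported_on X g)
      \<and> (\<forall>s\<in>B i. supported_on Y s) \<and> in_outer_span X Y (A i) (B i) (q i)"
  shows "card K + tv.dim (\<Union>i\<in>K. A i) + tv.dim (\<Union>i\<in>K. B i)
    \<le> (\<Sum>i\<in>K. tv.dim (A i)) + (\<Sum>i\<in>K. tv.dim (B i))"
proof -
  define F where "F i = {slice X (q i) \<kappa> | \<kappa>. \<kappa> \<in> extensional Y}" for i
  have "supported_on (Y \<union> X) (q i) \<and> finite (B i) \<and> (\<forall>s\<in>B i. supported_on Y s)
      \<and> (\<forall>\<iota>\<in>extensional X. slice Y (q i) \<iota> \<in> tv.span (B i))" if "i \<in> K" for i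
    using assms(4)[OF that] unfolding in_outer_span_def by (simp add: Un_commute)
  then have slices: "tv.dim (\<Union>i\<in>K. F i) + tv.dim (\<Union>i\<in>K. B i) \<le> (\<Sum>i\<in>K. tv.dim (B i))"
    unfolding F_def using assms(1)
    by (intro vanishing_sum_slices_dim_bound[of Y X K q B] assms(2,3)) auto
  have "\<forall>i\<in>K. \<exists>F'. F' \<subseteq> F i \<and> F i \<subseteq> tv.span F' \<and> finite F' \<and> F' \<subseteq> tv.span (A i) \<and> 0 < tv.dim F'"
  proof
    fix i assume i: "i \<in> K"
    have A: "F i \<subseteq> tv.span (A i)" "finite (A i)"
      using assms(4)[OF i] unfolding in_outer_span_def F_def by blast+
    have "supported_on (X \<union> Y) (q i)" "q i \<noteq> 0"
      using assms(4)[OF i] unfolding in_outer_span_def by blast+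
    then obtain \<kappa> where "\<kappa> \<in> extensional Y" "slice X (q i) \<kappa> \<noteq> 0"
      by (metis eq_0_if_slices_eq_0)
    then obtain F' where F': "F' \<subseteq> F i" "F i \<subseteq> tv.span F'" "finite F'" "0 < tv.dim F'"
      using finite_spanning_subsetE[OF A] unfolding F_def by blast
    moreover have "F' \<subseteq> tv.span (A i)" using F'(1) A(1) by blast
    ultimately show "\<exists>F'. F' \<subseteq> F i \<and> F i \<subseteq> tv.span F' \<and> finite F'
        \<and> F' \<subseteq> tv.span (A i) \<and> 0 < tv.dim F'"
      using F' by blast
  qed
  from bchoice[OF this] obtain F' where F': "\<forall>i\<in>K. F' i \<subseteq> F i \<and> F i \<subseteq> tv.span (F' i)
      \<and> finite (F' i) \<and> F' i \<subseteq> tv.span (A i) \<and> 0 < tv.dim (F' i)"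
    by blast
  have "tv.dim (\<Union>i\<in>K. A i) + (\<Sum>i\<in>K. tv.dim (F' i)) \<le> tv.dim (\<Union>i\<in>K. F' i) + (\<Sum>i\<in>K. tv.dim (A i))"
  proof (rule dim_UN_defect_mono[OF assms(2)])
    fix i assume "i \<in> K"
    then show "finite (F' i) \<and> finite (A i) \<and> F' i \<subseteq> tv.span (A i)"
      using F' assms(4) by blast
  qed
  moreover have "card K \<le> (\<Sum>i\<in>K. tv.dim (F' i))"
    using sum_mono[of K "\<lambda>_. 1::nat" "\<lambda>i. tv.dim (F' i)"] F' by (simp add: Suc_le_eq)
  moreover have "tv.span (\<Union>i\<in>K. F' i) = tv.span (\<Union>i\<in>K. F i)"
  proof (rule span_UN_eq)
    fix i assume "i \<in> K"
    then show "F' i \<subseteq> tv.span (F i) \<and> F i \<subseteq> tv.span (F' i)"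
      using F' tv.span_superset[of "F i"] by blast
  qed
  then have "tv.dim (\<Union>i\<in>K. F' i) = tv.dim (\<Union>i\<in>K. F i)" by (rule tv.span_eq_dim)
  ultimately show ?thesis using slices by linarith
qed

section \<open>The splitting theorem\<close>

lemma nonsplit_block_relation:
  assumes "nonsplit w E" "finite E" "e \<in> E" "E \<noteq> {e}" "w e \<noteq> 0"
    "partition_on (E - {e}) P" "independent_parts w P"
  obtains q where "\<And>C. C \<in> insert {e} P \<Longrightarrow> q C \<in> tv.span (w ` C) \<and> q C \<noteq> 0"
    "(\<Sum>C\<in>insert {e} P. q C) = 0"
proof -
  have fP: "finite P" using finite_elements[OF _ assms(6)] assms(2) by simp
  have eP: "{e} \<notin> P" using partition_onD1[OF assms(6)] by auto
  have "w ` (E - {e}) = (\<Union>C\<in>P. w ` C)" using partition_onD1[OF assms(6)] by auto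
  then obtain p where p: "\<forall>C\<in>P. p C \<in> tv.span (w ` C)" "w e = (\<Sum>C\<in>P. p C)"
    using in_span_UN_sum[OF fP] nonsplit_in_span_others[OF assms(1,3,4)] by metis
  have p_nz: "p C \<noteq> 0" if "C \<in> P" for C
    by (rule nonsplit_parts_nonzero[OF assms(1,3,6,7) fP p that])
  define q where "q C = (if C = {e} then - w e else p C)" for C
  show ?thesis
  proof
    show "q C \<in> tv.span (w ` C) \<and> q C \<noteq> 0" if "C \<in> insert {e} P" for C
      using that p(1) p_nz assms(5) eP tv.span_neg[OF tv.span_base[of "w e" "w ` {e}"]]
      by (auto simp: q_def)
    have "(\<Sum>C\<in>P. q C) = w e" unfolding p(2) using eP by (intro sum.cong) (auto simp: q_def)
    then show "(\<Sum>C\<in>insert {e} P. q C) = 0" using fP eP by (simp add: q_def)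
  qed
qed

lemma nonsplit_outer_blocks_dim_bound:
  fixes g s :: "'e \<Rightarrow> ('b, 'a::field) tensor" and X Y :: "nat set"
  defines "w \<equiv> \<lambda>e. outer X Y (g e) (s e)"
  assumes "X \<inter> Y = {}" "finite E" "e \<in> E" "E \<noteq> {e}"
    "\<forall>e\<in>E. g e \<noteq> 0 \<and> s e \<noteq> 0 \<and> supported_on X (g e) \<and> supported_on Y (s e)"
    "nonsplit w E" "partition_on (E - {e}) P" "independent_parts w P"
  shows "card P + tv.dim (g ` E) + tv.dim (s ` E) \<le> 1 + (\<Sum>C\<in>P. tv.dim (g ` C) + tv.dim (s ` C))"
proof -
  have "w e \<noteq> 0" using outer_neq_0[OF assms(2)] assms(4,6) unfolding w_def by blast
  then obtain q where q: "\<And>C. C \<in> insert {e} P \<Longrightarrow> q C \<in> tv.span (w ` C) \<and> q C \<noteq> 0"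
    "(\<Sum>C\<in>insert {e} P. q C) = 0"
    using nonsplit_block_relation[OF assms(7,3,4,5) _ assms(8,9)] by blast
  have fP: "finite P" using finite_elements[OF _ assms(8)] assms(3) by simp
  have eP: "{e} \<notin> P" using partition_onD1[OF assms(8)] by auto
  have "card (insert {e} P) + tv.dim (\<Union>C\<in>insert {e} P. g ` C) + tv.dim (\<Union>C\<in>insert {e} P. s ` C)
      \<le> (\<Sum>C\<in>insert {e} P. tv.dim (g ` C)) + (\<Sum>C\<in>insert {e} P. tv.dim (s ` C))"
  proof (rule vanishing_sum_dim_bound[OF assms(2) _ q(2)])
    fix C assume C: "C \<in> insert {e} P"
    then have "C \<subseteq> E" using partition_onD1[OF assms(8)] assms(4) by auto
    moreover have "finite C" using \<open>C \<subseteq> E\<close> assms(3) by (rule finite_subset)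
    ultimately show "q C \<noteq> 0 \<and> finite (g ` C) \<and> finite (s ` C) \<and> (\<forall>x\<in>g ` C. supported_on X x)
        \<and> (\<forall>x\<in>s ` C. supported_on Y x) \<and> in_outer_span X Y (g ` C) (s ` C) (q C)"
      using q(1)[OF C] assms(6) in_outer_span_if_in_span_outer[OF assms(2), of C g s "q C"]
      unfolding w_def by blast
  qed (use fP in simp)
  moreover have "(\<Union>C\<in>insert {e} P. g ` C) = g ` E" "(\<Union>C\<in>insert {e} P. s ` C) = s ` E"
    using partition_onD1[OF assms(8)] assms(4) by auto
  moreover have "tv.dim (g ` {e}) = 1" "tv.dim (s ` {e}) = 1"
    using assms(4,6) by (simp_all add: dim_singleton_nonzero)
  ultimately show ?thesis using fP eP by (simp add: sum.distrib)
qed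

lemma nonsplit_outer_dim_bound:
  fixes g s :: "'e \<Rightarrow> ('b, 'a::field) tensor"
  assumes "X \<inter> Y = {}" "finite E" "E \<noteq> {}"
    "\<forall>e\<in>E. g e \<noteq> 0 \<and> s e \<noteq> 0 \<and> supported_on X (g e) \<and> supported_on Y (s e)"
    "nonsplit (\<lambda>e. outer X Y (g e) (s e)) E"
  shows "tv.dim (g ` E) + tv.dim (s ` E) \<le> tv.dim ((\<lambda>e. outer X Y (g e) (s e)) ` E) + 1"
  using assms(2-)
proof (induction "card E" arbitrary: E rule: less_induct)
  case less
  define w where "w = (\<lambda>e. outer X Y (g e) (s e))"
  obtain e where e: "e \<in> E" using less.prems(2) by blast
  show ?case
  proof (cases "E = {e}")
    case True
    moreover have "outer X Y (g e) (s e) \<noteq> 0"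
      using less.prems(3) e outer_neq_0[OF assms(1)] by blast
    ultimately show ?thesis using less.prems(3) by (simp add: dim_singleton_nonzero)
  next
    case False
    obtain P where P: "partition_on (E - {e}) P" "\<forall>C\<in>P. nonsplit w C" "independent_parts w P"
      using nonsplit_decomposition[of "E - {e}" w] less.prems(1) by blast
    have fP: "finite P" using finite_elements[OF _ P(1)] less.prems(1) by simp
    have C: "C \<subset> E" "finite C" "C \<noteq> {}" if "C \<in> P" for C
      using partition_onD1[OF P(1)] partition_onD3[OF P(1)] that e less.prems(1)
      by (auto intro: finite_subset)
    have "card P + tv.dim (g ` E) + tv.dim (s ` E) \<le> 1 + (\<Sum>C\<in>P. tv.dim (g ` C) + tv.dim (s ` C))"
      using nonsplit_outer_blocks_dim_bound[OF assms(1) less.prems(1) e False less.prems(3,4) P(1)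
          P(3)[unfolded w_def]] .
    also have "(\<Sum>C\<in>P. tv.dim (g ` C) + tv.dim (s ` C)) \<le> (\<Sum>C\<in>P. tv.dim (w ` C) + 1)"
    proof (rule sum_mono)
      fix C assume "C \<in> P"
      then show "tv.dim (g ` C) + tv.dim (s ` C) \<le> tv.dim (w ` C) + 1"
        using less.hyps[of C] C[of C] psubset_card_mono[OF less.prems(1)] less.prems(3) P(2)
        unfolding w_def by (meson psubsetE subsetD)
    qed
    also have "\<dots> = tv.dim (w ` (E - {e})) + card P"
      using dim_UN_independent_parts[OF fP _ P(3)] C partition_onD1[OF P(1)] by (simp add: sum_Suc)
    also have "tv.dim (w ` (E - {e})) \<le> tv.dim (w ` E)"
      using less.prems(1) by (intro dim_le_if_subset) auto
    finally show ?thesis unfolding w_def by simp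
  qed
qed

theorem nonsplit_ptensor_dim_bound:
  fixes z :: "'e \<Rightarrow> nat \<Rightarrow> 'b \<Rightarrow> 'a::field"
  assumes "finite E" "E \<noteq> {}" "finite M" "partition_on M P"
    "\<forall>e\<in>E. ptensor M (z e) \<noteq> 0" "nonsplit (\<lambda>e. ptensor M (z e)) E"
  shows "(\<Sum>J\<in>P. int (tv.dim ((\<lambda>e. ptensor J (z e)) ` E)) - 1) + 1
    \<le> int (tv.dim ((\<lambda>e. ptensor M (z e)) ` E))"
  using assms(3-)
proof (induction "card P" arbitrary: M P rule: less_induct)
  case less
  have fP: "finite P" using finite_elements less.prems(1,2) by blast
  obtain e where e: "e \<in> E" using assms(2) by blast
  show ?case
  proof (cases "P = {}")
    case True
    have "0 < tv.dim ((\<lambda>e. ptensor M (z e)) ` E)"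
      using dim_pos_if_nonzero_in_span[of _ "ptensor M (z e)"] less.prems(3) e assms(1)
      by (simp add: tv.span_base)
    then show ?thesis using True by simp
  next
    case False
    then obtain J where J: "J \<in> P" by blast
    define M' where "M' = M - J"
    have "J \<subseteq> M" using partition_onD1[OF less.prems(2)] J by blast
    then have split: "ptensor M (z e) = outer J M' (ptensor J (z e)) (ptensor M' (z e))" for e
      unfolding M'_def by (rule ptensor_eq_outer[OF less.prems(1)])
    have JM': "J \<inter> M' = {}" unfolding M'_def by blast
    have factors: "\<forall>e\<in>E. ptensor J (z e) \<noteq> 0 \<and> ptensor M' (z e) \<noteq> 0
        \<and> supported_on J (ptensor J (z e)) \<and> supported_on M' (ptensor M' (z e))"
      using less.prems(3) split by (auto simp: supported_on_ptensor)
    have ns: "nonsplit (\<lambda>e. outer J M' (ptensor J (z e)) (ptensor M' (z e))) E"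
      using less.prems(4) split by simp
    have "tv.dim ((\<lambda>e. ptensor J (z e)) ` E) + tv.dim ((\<lambda>e. ptensor M' (z e)) ` E)
        \<le> tv.dim ((\<lambda>e. ptensor M (z e)) ` E) + 1"
      using nonsplit_outer_dim_bound[OF JM' assms(1,2) factors ns] split by simp
    moreover have "(\<Sum>J\<in>P - {J}. int (tv.dim ((\<lambda>e. ptensor J (z e)) ` E)) - 1) + 1
        \<le> int (tv.dim ((\<lambda>e. ptensor M' (z e)) ` E))"
    proof (rule less.hyps)
      show "card (P - {J}) < card P" using fP J by (rule card_Diff1_less)
      show "finite M'" using less.prems(1) unfolding M'_def by simp
      show "partition_on M' (P - {J})"
        unfolding M'_def by (rule partition_on_Diff_part[OF less.prems(2) J])
      show "\<forall>e\<in>E. ptensor M' (z e) \<noteq> 0" using factors by blast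
      show "nonsplit (\<lambda>e. ptensor M' (z e)) E"
        using nonsplit_right_factors[OF JM' _ ns] factors by blast
    qed
    moreover have "(\<Sum>J\<in>P. int (tv.dim ((\<lambda>e. ptensor J (z e)) ` E)) - 1)
        = (int (tv.dim ((\<lambda>e. ptensor J (z e)) ` E)) - 1)
          + (\<Sum>J\<in>P - {J}. int (tv.dim ((\<lambda>e. ptensor J (z e)) ` E)) - 1)"
      by (rule sum.remove[OF fP J])
    ultimately show ?thesis by linarith
  qed
qed

section \<open>Signed relations among product tensors\<close>

definition side_sign :: "'l + 'r \<Rightarrow> 'a::field" where
  "side_sign = case_sum (\<lambda>_. 1) (\<lambda>_. - 1)"

lemma side_sign_simps [simp]: "side_sign (Inl a) = 1" "side_sign (Inr b) = - 1"
  by (simp_all add: side_sign_def)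

definition left_dominated :: "('l + 'r \<Rightarrow> 'v) \<Rightarrow> ('l + 'r) set \<Rightarrow> bool" where
  "left_dominated w E \<longleftrightarrow> card (Inl -` E) \<le> card (Inr -` E) \<and>
     (card (Inl -` E) = card (Inr -` E) \<longrightarrow>
        image_mset (w \<circ> Inl) (mset_set (Inl -` E)) = image_mset (w \<circ> Inr) (mset_set (Inr -` E)))"

lemma Inl_Inr_vimage_decomp: "E = Inl ` (Inl -` E) \<union> Inr ` (Inr -` E)"
  by (auto simp: image_iff) (metis sumE)

lemma vimage_Inl_Plus [simp]: "Inl -` (A <+> B) = A"
  and vimage_Inr_Plus [simp]: "Inr -` (A <+> B) = B"
  by auto

lemma signed_sum_Plus:
  assumes "finite A" "finite B"
  shows "(\<Sum>i\<in>A <+> B. tscale (side_sign i) (w i :: 'c \<Rightarrow> 'a::field))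
    = (\<Sum>a\<in>A. w (Inl a)) - (\<Sum>b\<in>B. w (Inr b))"
proof -
  have "Inl ` A \<inter> Inr ` B = {}" by blast
  then have "(\<Sum>i\<in>A <+> B. tscale (side_sign i) (w i))
      = (\<Sum>i\<in>Inl ` A. tscale (side_sign i) (w i)) + (\<Sum>i\<in>Inr ` B. tscale (side_sign i) (w i))"
    unfolding Plus_def using assms by (intro sum.union_disjoint) auto
  then show ?thesis by (simp add: sum.reindex tv.scale_one tv.scale_minus_left sum_negf)
qed

lemma finite_vimage_Inl_Inr:
  "finite E \<Longrightarrow> finite (Inl -` E)" "finite E \<Longrightarrow> finite (Inr -` E)"
  by (simp_all add: finite_vimageI)

lemma card_Inl_Inr_vimage: "finite E \<Longrightarrow> card E = card (Inl -` E) + card (Inr -` E)"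
  using card_Plus[of "Inl -` E" "Inr -` E"] Inl_Inr_vimage_decomp[of E]
  by (simp add: finite_vimage_Inl_Inr Plus_def)

lemma left_dominated_Un:
  assumes "finite Y" "finite Z" "Y \<inter> Z = {}" "left_dominated w Y" "left_dominated w Z"
  shows "left_dominated w (Y \<union> Z)"
proof -
  have fin: "finite (Inl -` Y)" "finite (Inl -` Z)" "finite (Inr -` Y)" "finite (Inr -` Z)"
    using assms(1,2) by (simp_all add: finite_vimage_Inl_Inr)
  have disj: "Inl -` Y \<inter> Inl -` Z = {}" "Inr -` Y \<inter> Inr -` Z = {}" using assms(3) by auto
  have "card (Inl -` (Y \<union> Z)) = card (Inl -` Y) + card (Inl -` Z)"
    "card (Inr -` (Y \<union> Z)) = card (Inr -` Y) + card (Inr -` Z)"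
    "mset_set (Inl -` (Y \<union> Z)) = mset_set (Inl -` Y) + mset_set (Inl -` Z)"
    "mset_set (Inr -` (Y \<union> Z)) = mset_set (Inr -` Y) + mset_set (Inr -` Z)"
    unfolding vimage_Un
    using card_Un_disjoint[OF fin(1,2) disj(1)] card_Un_disjoint[OF fin(3,4) disj(2)]
      mset_set_Union[OF fin(1,2) disj(1)] mset_set_Union[OF fin(3,4) disj(2)] by simp_all
  then show ?thesis using assms(4,5) unfolding left_dominated_def by auto
qed

lemma left_dominated_if_card_Inl_le_1:
  assumes "finite E" "\<forall>i\<in>E. w i \<noteq> 0" "(\<Sum>i\<in>E. tscale (side_sign i) (w i)) = 0"
    "card (Inl -` E) \<le> 1"
  shows "left_dominated w E"
proof (cases "Inl -` E = {}")
  case True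
  then show ?thesis
    using finite_vimage_Inl_Inr(2)[OF assms(1)] by (auto simp: left_dominated_def)
next
  case False
  then have "card (Inl -` E) = 1"
    using assms(4) finite_vimage_Inl_Inr(1)[OF assms(1)] by (simp add: le_Suc_eq)
  then obtain a where a: "Inl -` E = {a}" by (rule card_1_singletonE)
  have "Inr -` E \<noteq> {}"
  proof
    assume "Inr -` E = {}"
    then have "E = {Inl a}" using Inl_Inr_vimage_decomp[of E] a by simp
    then show False using assms(2,3) by (simp add: tv.scale_one)
  qed
  then have "1 \<le> card (Inr -` E)"
    using finite_vimage_Inl_Inr(2)[OF assms(1)] by (simp add: Suc_le_eq card_gt_0_iff)
  moreover have
    "image_mset (w \<circ> Inl) (mset_set (Inl -` E)) = image_mset (w \<circ> Inr) (mset_set (Inr -` E))"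
    if card1: "card (Inr -` E) = 1"
  proof -
    obtain b where b: "Inr -` E = {b}" using card1 by (rule card_1_singletonE)
    then have "E = {Inl a, Inr b}" using Inl_Inr_vimage_decomp[of E] a by auto
    then have "w (Inl a) - w (Inr b) = 0" using assms(3) by (simp add: tscale_def fun_eq_iff)
    then show ?thesis using a b by simp
  qed
  ultimately show ?thesis using \<open>card (Inl -` E) = 1\<close> unfolding left_dominated_def by auto
qed

lemma relation_restrict_if_span_inter_trivial:
  fixes w :: "'e \<Rightarrow> 'c \<Rightarrow> 'a::field"
  assumes "finite E" "Y \<subseteq> E" "tv.span (w ` Y) \<inter> tv.span (w ` (E - Y)) \<subseteq> {0}"
    "(\<Sum>i\<in>E. tscale (c i) (w i)) = 0"
  shows "(\<Sum>i\<in>Y. tscale (c i) (w i)) = 0" "(\<Sum>i\<in>E - Y. tscale (c i) (w i)) = 0"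
proof -
  define s1 where "s1 = (\<Sum>i\<in>Y. tscale (c i) (w i))"
  define s2 where "s2 = (\<Sum>i\<in>E - Y. tscale (c i) (w i))"
  have "(\<Sum>i\<in>E. tscale (c i) (w i)) = s2 + s1"
    unfolding s1_def s2_def by (rule sum.subset_diff[OF assms(2,1)])
  then have s1: "s1 = - s2" using assms(4) by (simp add: eq_neg_iff_add_eq_0 add.commute)
  have "s1 \<in> tv.span (w ` Y)"
    unfolding s1_def by (intro tv.span_sum tv.span_scale tv.span_base) auto
  moreover have "s2 \<in> tv.span (w ` (E - Y))"
    unfolding s2_def by (intro tv.span_sum tv.span_scale tv.span_base) auto
  then have "s1 \<in> tv.span (w ` (E - Y))" unfolding s1 by (rule tv.span_neg)
  ultimately have "s1 = 0" using assms(3) by blast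
  then show "(\<Sum>i\<in>Y. tscale (c i) (w i)) = 0" "(\<Sum>i\<in>E - Y. tscale (c i) (w i)) = 0"
    using s1 unfolding s1_def s2_def by simp_all
qed

text \<open>The splitting theorem and the hypothesis for \<open>S = Inl -` E\<close> give
  \<open>2 |S| \<le> dim span \<le> |E| - 1\<close>.\<close>

lemma nonsplit_signed_relation_card_less:
  fixes z :: "nat + 'r \<Rightarrow> nat \<Rightarrow> 'b \<Rightarrow> 'a::field"
  assumes "finite M" "finite E" "\<forall>i\<in>E. ptensor M (z i) \<noteq> 0" "nonsplit (\<lambda>i. ptensor M (z i)) E"
    "(\<Sum>i\<in>E. tscale (side_sign i) (ptensor M (z i))) = 0" "Inl -` E \<noteq> {}" "partition_on M P"
    "2 * int (card (Inl -` E))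
      \<le> (\<Sum>J\<in>P. int (tv.dim ((\<lambda>a. ptensor J (z (Inl a))) ` (Inl -` E))) - 1) + 1"
  shows "card (Inl -` E) < card (Inr -` E)"
proof -
  have dim_le:
    "tv.dim ((\<lambda>a. ptensor J (z (Inl a))) ` (Inl -` E)) \<le> tv.dim ((\<lambda>i. ptensor J (z i)) ` E)"
    for J using assms(2) by (intro dim_le_if_subset) auto
  have "(\<Sum>J\<in>P. int (tv.dim ((\<lambda>a. ptensor J (z (Inl a))) ` (Inl -` E))) - 1)
      \<le> (\<Sum>J\<in>P. int (tv.dim ((\<lambda>i. ptensor J (z i)) ` E)) - 1)"
    by (intro sum_mono diff_right_mono) (simp add: dim_le)
  also have "\<dots> + 1 \<le> int (tv.dim ((\<lambda>i. ptensor M (z i)) ` E))"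
    using assms(6) by (intro nonsplit_ptensor_dim_bound[OF assms(2) _ assms(1,7,3,4)]) auto
  finally have "2 * card (Inl -` E) \<le> tv.dim ((\<lambda>i. ptensor M (z i)) ` E)"
    using assms(8) by linarith
  moreover obtain a where "Inl a \<in> E" using assms(6) by blast
  then have "tv.dim ((\<lambda>i. ptensor M (z i)) ` E) < card E"
    using dim_image_less_card_if_relation[OF assms(2,5)] by simp
  ultimately show ?thesis using card_Inl_Inr_vimage[OF assms(2)] by linarith
qed

lemma signed_relation_left_dominated:
  fixes z :: "nat + 'r \<Rightarrow> nat \<Rightarrow> 'b \<Rightarrow> 'a::field"
  assumes "finite M" "finite E" "\<forall>i\<in>E. ptensor M (z i) \<noteq> 0"
    "\<forall>S \<subseteq> Inl -` E. 2 \<le> card S \<longrightarrow> (\<exists>P. partition_on M P \<and>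
      2 * int (card S) \<le> (\<Sum>J\<in>P. int (tv.dim ((\<lambda>a. ptensor J (z (Inl a))) ` S)) - 1) + 1)"
    "(\<Sum>i\<in>E. tscale (side_sign i) (ptensor M (z i))) = 0"
  shows "left_dominated (\<lambda>i. ptensor M (z i)) E"
  using assms(2-)
proof (induction "card E" arbitrary: E rule: less_induct)
  case less
  define w where "w = (\<lambda>i. ptensor M (z i))"
  show ?case
  proof (cases "card (Inl -` E) \<le> 1")
    case True
    then show ?thesis by (rule left_dominated_if_card_Inl_le_1[OF less.prems(1,2,4)])
  next
    case False
    show ?thesis
    proof (cases "nonsplit w E")
      case True
      have "2 \<le> card (Inl -` E)" "Inl -` E \<noteq> {}" using False by auto
      then obtain P where P: "partition_on M P" "2 * int (card (Inl -` E))
          \<le> (\<Sum>J\<in>P. int (tv.dim ((\<lambda>a. ptensor J (z (Inl a))) ` (Inl -` E))) - 1) + 1"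
        using less.prems(3)[rule_format, OF order_refl] by blast
      have "card (Inl -` E) < card (Inr -` E)"
        using nonsplit_signed_relation_card_less[OF assms(1) less.prems(1,2) True[unfolded w_def]
            less.prems(4) \<open>Inl -` E \<noteq> {}\<close> P] .
      then show ?thesis by (simp add: left_dominated_def)
    next
      case False
      then obtain Y where Y: "Y \<subseteq> E" "Y \<noteq> {}" "Y \<noteq> E"
        "tv.span (w ` Y) \<inter> tv.span (w ` (E - Y)) \<subseteq> {0}"
        unfolding nonsplit_def by blast
      have IH: "left_dominated w E'"
        if E': "E' \<subseteq> E" "E' \<noteq> E" "(\<Sum>i\<in>E'. tscale (side_sign i) (w i)) = 0" for E'
      proof -
        have "card E' < card E" using E'(1,2) less.prems(1) by (meson psubsetI psubset_card_mono)
        moreover have "finite E'" using E'(1) less.prems(1) by (rule finite_subset)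
        moreover have "\<forall>i\<in>E'. ptensor M (z i) \<noteq> 0" using E'(1) less.prems(2) by blast
        moreover have "\<forall>S \<subseteq> Inl -` E'. 2 \<le> card S \<longrightarrow> (\<exists>P. partition_on M P \<and>
            2 * int (card S) \<le> (\<Sum>J\<in>P. int (tv.dim ((\<lambda>a. ptensor J (z (Inl a))) ` S)) - 1) + 1)"
          using less.prems(3) vimage_mono[OF E'(1), of Inl] by (meson order.trans)
        ultimately show ?thesis
          unfolding w_def using E'(3)[unfolded w_def] by (rule less.hyps)
      qed
      have "(\<Sum>i\<in>E. tscale (side_sign i) (w i)) = 0" using less.prems(4) by (simp add: w_def)
      note rel = relation_restrict_if_span_inter_trivial[OF less.prems(1) Y(1,4) this]
      have "left_dominated w Y" using IH[OF Y(1,3) rel(1)] .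
      moreover have "left_dominated w (E - Y)" using IH[OF _ _ rel(2)] Y(1,2) by blast
      moreover have "finite Y" "finite (E - Y)" using less.prems(1) Y(1) finite_subset by auto
      ultimately have "left_dominated w (Y \<union> (E - Y))" using left_dominated_Un by blast
      then show ?thesis using Y(1) unfolding w_def by (simp add: Un_absorb1)
    qed
  qed
qed

theorem theorem5p2:
  fixes B :: "nat \<Rightarrow> 'b set"
    and xf :: "nat \<Rightarrow> nat \<Rightarrow> 'b \<Rightarrow> 'a::field"
    and n m :: nat
  assumes "n \<ge> 2" and "m \<ge> 3"
    and "\<forall>a\<in>{1..n}. \<forall>j\<in>{1..m}. xf a j \<in> fsupp_space (B j)"
    and "\<forall>a\<in>{1..n}. ptensor {1..m} (xf a) \<noteq> 0"
    and "\<forall>S. S \<subseteq> {1..n} \<and> 2 \<le> card S \<longrightarrow>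
           (\<exists>P. partition_on {1..m} P \<and>
                2 * int (card S) \<le> (\<Sum>J\<in>P. int (dJS xf J S) - 1) + 1)"
  shows "unique_tensor_rank_decomp B m n (\<lambda>a. ptensor {1..m} (xf a))"
  unfolding unique_tensor_rank_decomp_def
proof (intro allI impI)
  fix r y
  assume h: "r \<le> n \<and> (\<forall>a\<in>{1..r}. is_product_tensor B m (y a)) \<and>
    (\<Sum>a\<in>{1..r}. y a) = (\<Sum>a\<in>{1..n}. ptensor {1..m} (xf a))"
  obtain zy where zy: "\<forall>b\<in>{1..r}. y b \<noteq> 0 \<and> y b = ptensor {1..m} (zy b)"
    using h bchoice[of "{1..r}" "\<lambda>b z. y b \<noteq> 0 \<and> y b = ptensor {1..m} z"]
    unfolding is_product_tensor_def by blast
  define z where "z = case_sum xf zy"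
  have "left_dominated (\<lambda>i. ptensor {1..m} (z i)) ({1..n} <+> {1..r})"
  proof (rule signed_relation_left_dominated)
    show "\<forall>i\<in>{1..n} <+> {1..r}. ptensor {1..m} (z i) \<noteq> 0"
      using assms(4) zy by (auto simp: z_def)
    show "\<forall>S \<subseteq> Inl -` ({1..n} <+> {1..r}). 2 \<le> card S \<longrightarrow> (\<exists>P. partition_on {1..m} P \<and>
        2 * int (card S) \<le> (\<Sum>J\<in>P. int (tv.dim ((\<lambda>a. ptensor J (z (Inl a))) ` S)) - 1) + 1)"
      using assms(5) by (simp add: dJS_def z_def)
    have "(\<Sum>b\<in>{1..r}. ptensor {1..m} (zy b)) = (\<Sum>b\<in>{1..r}. y b)" using zy by simp
    then show "(\<Sum>i\<in>{1..n} <+> {1..r}. tscale (side_sign i) (ptensor {1..m} (z i))) = 0"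
      using h by (simp add: signed_sum_Plus z_def)
  qed simp_all
  then have "r = n" "image_mset (\<lambda>a. ptensor {1..m} (xf a)) (mset_set {1..n})
      = image_mset (\<lambda>b. ptensor {1..m} (zy b)) (mset_set {1..r})"
    using h by (auto simp: left_dominated_def z_def comp_def)
  moreover have
    "image_mset (\<lambda>b. ptensor {1..m} (zy b)) (mset_set {1..r}) = image_mset y (mset_set {1..r})"
    using zy by (intro image_mset_cong) auto
  ultimately show "r = n \<and>
      image_mset y (mset_set {1..r}) = image_mset (\<lambda>a. ptensor {1..m} (xf a)) (mset_set {1..n})"
    by simp
qed

end
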